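(* For every $\eta\in(\mathbb R\cup\{\infty\})^M$ and every ideal $\mathcal I\subset\mathbb K[x^*,y]$, one has $(\operatorname{In}_{\omega,\eta}\mathcal I)^{e}=\operatorname{In}_\eta(\mathcal I^{e})$, where ${}^e$ denotes extension of ideals from $\mathbb K[x^*,y]$ to $S_\omega[y]$.
   Context: Let $\mathbb{K}$ be an algebraically closed field of characteristic zero, $N,M$ positive integers, $\omega\in\mathbb{R}^N$ with coordinates linearly independent over $\mathbb{Q}$. $S_\omega$ is the field of $\omega$-positive Puiseux series: formal sums $\phi=\sum_{\alpha\in\mathbb Q^N}c_\alpha x^\alpha$ ($c_\alpha\in\mathbb K$) with exponent set $\mathcal E(\phi)$ contained in $\frac1k\mathbb Z^N$ for some $k$ and with $\mathcal E(x^\gamma\phi)\subset\sigma$ for some $\gamma\in\mathbb Q^N$ and some rational polyhedral cone $\sigma$ with $v\cdot\omega\ge0$ on $\sigma$. $\operatorname{ord}_\omega(\phi)=\min_{\alpha\in\mathcal E(\phi)}\omega\cdot\alpha$, $\operatorname{in}_\omega(\phi)$ the term $c_\alpha x^\alpha$ attaining it ($\operatorname{ord}_\omega 0=\infty$, $\operatorname{in}_\omega0=0$). Conventions $\infty\cdot a=\infty$ ($a\ne0$), $\infty\cdot0=0$; $\Lambda(\eta)=\{i:\eta_i\neq\infty\}$. For $f=\sum_\beta\phi_\beta y^\beta\in S_\omega[y]$: $\operatorname{ord}_\eta(f)=\min_{\phi_\beta\ne0}(\operatorname{ord}_\omega\phi_\beta+\eta\cdot\beta)$, and if finite $\operatorname{in}_\eta(f)=\sum_{\operatorname{ord}_\omega\phi_\beta+\eta\cdot\beta=\operatorname{ord}_\eta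 f}\operatorname{in}_\omega(\phi_\beta)y^\beta$; for an ideal $\mathfrak I\subset S_\omega[y]$, $\operatorname{In}_\eta\mathfrak I$ is generated by $\{\operatorname{in}_\eta f:f\in\mathfrak I,\operatorname{ord}_\eta f<\infty\}\cup\{y_i:i\notin\Lambda(\eta)\}$. Let $\mathbb K[x^*,y]=\mathbb K[x_1^{\pm1},\dots,x_N^{\pm1},y_1,\dots,y_M]\subset S_\omega[y]$. For $f=\sum a_{\alpha,\beta}x^\alpha y^\beta\in\mathbb K[x^*,y]$: $\operatorname{ord}_{\omega,\eta}(f)=\min_{a_{\alpha,\beta}\ne0}(\omega\cdot\alpha+\eta\cdot\beta)$; $\operatorname{in}_{\omega,\eta}(f)$ is the sum of the terms $a_{\alpha,\beta}x^\alpha y^\beta$ attaining this minimum if it is finite, and $0$ otherwise. For an ideal $\mathcal I\subset\mathbb K[x^*,y]$, $\operatorname{In}_{\omega,\eta}\mathcal I$ is the ideal of $\mathbb K[x^*,y]$ generated by $\{\operatorname{in}_{\omega,\eta}f:f\in\mathcal I\}\cup\{y_i:i\notin\Lambda(\eta)\}$. *)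

theory Defs
  imports "HOL-Library.Function_Algebras" "HOL-Library.Extended_Real"
          "HOL-Computational_Algebra.Polynomial"
begin

text \<open>
The x-variables are indexed by a finite type 'n (N = CARD('n)),
the y-variables by a finite type 'm (M = CARD('m)).
An element of S_omega[y] (and of K[x^*,y] as a subset) is represented by its
coefficient function  f :: ('m => nat) => ('n => rat) => 'k :
f beta is the Puiseux-series coefficient phi_beta of y^beta, and
f beta alpha is the coefficient of x^alpha y^beta.
\<close>

definition alg_closed_field :: "'k::field itself \<Rightarrow> bool" where
  "alg_closed_field _ \<longleftrightarrow> (\<forall>p::'k poly. degree p > 0 \<longrightarrow> (\<exists>z. poly p z = 0))"

definition rat_lin_indep :: "('n::finite \<Rightarrow> real) \<Rightarrow> bool" where
  "rat_lin_indep \<omega> \<longleftrightarrow>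
     (\<forall>q::'n \<Rightarrow> rat. (\<Sum>i\<in>UNIV. real_of_rat (q i) * \<omega> i) = 0 \<longrightarrow> q = (\<lambda>_. 0))"

definition wdot :: "('n::finite \<Rightarrow> real) \<Rightarrow> ('n \<Rightarrow> rat) \<Rightarrow> real" where
  "wdot \<omega> \<alpha> = (\<Sum>i\<in>UNIV. \<omega> i * real_of_rat (\<alpha> i))"

text \<open>eta . beta with conventions infinity * a = infinity (a \<noteq> 0), infinity * 0 = 0.\<close>
definition edot :: "('m::finite \<Rightarrow> ereal) \<Rightarrow> ('m \<Rightarrow> nat) \<Rightarrow> ereal" where
  "edot \<eta> \<beta> = (\<Sum>i\<in>UNIV. if \<beta> i = 0 then 0 else \<eta> i * ereal (real (\<beta> i)))"

definition rat_cone :: "('n \<Rightarrow> rat) set \<Rightarrow> ('n \<Rightarrow> rat) set" where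
  "rat_cone V = {v. \<exists>t. (\<forall>w\<in>V. t w \<ge> (0::rat)) \<and> v = (\<lambda>i. \<Sum>w\<in>V. t w * w i)}"

definition puiseux :: "('n::finite \<Rightarrow> real) \<Rightarrow> (('n \<Rightarrow> rat) \<Rightarrow> 'k::zero) \<Rightarrow> bool" where
  "puiseux \<omega> \<phi> \<longleftrightarrow>
     (\<exists>k::nat. k > 0 \<and> (\<forall>\<alpha>. \<phi> \<alpha> \<noteq> 0 \<longrightarrow> (\<forall>i. of_nat k * \<alpha> i \<in> \<int>))) \<and>
     (\<exists>\<gamma> V. finite V \<and> (\<forall>v\<in>rat_cone V. wdot \<omega> v \<ge> 0) \<and>
             (\<forall>\<alpha>. \<phi> \<alpha> \<noteq> 0 \<longrightarrow> (\<lambda>i. \<alpha> i + \<gamma> i) \<in> rat_cone V))"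

text \<open>Elements of S_omega[y]\<close>
definition spoly :: "('n::finite \<Rightarrow> real) \<Rightarrow> (('m \<Rightarrow> nat) \<Rightarrow> ('n \<Rightarrow> rat) \<Rightarrow> 'k::zero) \<Rightarrow> bool" where
  "spoly \<omega> f \<longleftrightarrow> finite {\<beta>. f \<beta> \<noteq> (\<lambda>_. 0)} \<and> (\<forall>\<beta>. puiseux \<omega> (f \<beta>))"

text \<open>Elements of K[x^*,y] (Laurent in x, polynomial in y)\<close>
definition laurent :: "(('m \<Rightarrow> nat) \<Rightarrow> ('n \<Rightarrow> rat) \<Rightarrow> 'k::zero) \<Rightarrow> bool" where
  "laurent f \<longleftrightarrow> finite {(\<beta>, \<alpha>). f \<beta> \<alpha> \<noteq> 0} \<and>
                 (\<forall>\<beta> \<alpha>. f \<beta> \<alpha> \<noteq> 0 \<longrightarrow> (\<forall>i. \<alpha> i \<in> \<int>))"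

text \<open>Product (the defining sum is finite for elements of S_omega[y]).\<close>
definition pmult :: "(('m \<Rightarrow> nat) \<Rightarrow> ('n \<Rightarrow> rat) \<Rightarrow> 'k::comm_ring_1)
     \<Rightarrow> (('m \<Rightarrow> nat) \<Rightarrow> ('n \<Rightarrow> rat) \<Rightarrow> 'k) \<Rightarrow> ('m \<Rightarrow> nat) \<Rightarrow> ('n \<Rightarrow> rat) \<Rightarrow> 'k" where
  "pmult f g = (\<lambda>\<beta> \<alpha>. \<Sum>(\<beta>1, \<alpha>1) \<in> {(\<beta>1, \<alpha>1). \<beta>1 \<le> \<beta> \<and> f \<beta>1 \<alpha>1 \<noteq> 0 \<and> g (\<beta> - \<beta>1) (\<alpha> - \<alpha>1) \<noteq> 0}.
                    f \<beta>1 \<alpha>1 * g (\<beta> - \<beta>1) (\<alpha> - \<alpha>1))"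

definition gen_ideal :: "((('m \<Rightarrow> nat) \<Rightarrow> ('n \<Rightarrow> rat) \<Rightarrow> 'k::comm_ring_1) \<Rightarrow> bool)
     \<Rightarrow> (('m \<Rightarrow> nat) \<Rightarrow> ('n \<Rightarrow> rat) \<Rightarrow> 'k) set \<Rightarrow> (('m \<Rightarrow> nat) \<Rightarrow> ('n \<Rightarrow> rat) \<Rightarrow> 'k) set" where
  "gen_ideal C G = {(\<Sum>i<n. pmult (g i) (h i)) | (n::nat) g h. \<forall>i<n. C (g i) \<and> h i \<in> G}"

definition laurent_ideal :: "(('m \<Rightarrow> nat) \<Rightarrow> ('n \<Rightarrow> rat) \<Rightarrow> 'k::comm_ring_1) set \<Rightarrow> bool" where
  "laurent_ideal I \<longleftrightarrow> (\<forall>f\<in>I. laurent f) \<and> 0 \<in> I \<and> (\<forall>f\<in>I. \<forall>g\<in>I. f + g \<in> I) \<and>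
      (\<forall>f\<in>I. \<forall>g. laurent g \<longrightarrow> pmult g f \<in> I)"

definition ext_ideal :: "('n::finite \<Rightarrow> real) \<Rightarrow> (('m \<Rightarrow> nat) \<Rightarrow> ('n \<Rightarrow> rat) \<Rightarrow> 'k::comm_ring_1) set
     \<Rightarrow> (('m \<Rightarrow> nat) \<Rightarrow> ('n \<Rightarrow> rat) \<Rightarrow> 'k) set" where
  "ext_ideal \<omega> I = gen_ideal (spoly \<omega>) I"

definition yvar :: "'m \<Rightarrow> ('m \<Rightarrow> nat) \<Rightarrow> ('n \<Rightarrow> rat) \<Rightarrow> 'k::comm_ring_1" where
  "yvar i = (\<lambda>\<beta> \<alpha>. if \<beta> = (\<lambda>j. if j = i then 1 else 0) \<and> \<alpha> = (\<lambda>_. 0) then 1 else 0)"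

definition ord_w :: "('n::finite \<Rightarrow> real) \<Rightarrow> (('n \<Rightarrow> rat) \<Rightarrow> 'k::zero) \<Rightarrow> ereal" where
  "ord_w \<omega> \<phi> = (INF \<alpha>\<in>{\<alpha>. \<phi> \<alpha> \<noteq> 0}. ereal (wdot \<omega> \<alpha>))"

definition in_w :: "('n::finite \<Rightarrow> real) \<Rightarrow> (('n \<Rightarrow> rat) \<Rightarrow> 'k::zero) \<Rightarrow> ('n \<Rightarrow> rat) \<Rightarrow> 'k" where
  "in_w \<omega> \<phi> = (\<lambda>\<alpha>. if \<phi> \<alpha> \<noteq> 0 \<and> ereal (wdot \<omega> \<alpha>) = ord_w \<omega> \<phi> then \<phi> \<alpha> else 0)"

definition ord_eta :: "('n::finite \<Rightarrow> real) \<Rightarrow> ('m::finite \<Rightarrow> ereal)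
     \<Rightarrow> (('m \<Rightarrow> nat) \<Rightarrow> ('n \<Rightarrow> rat) \<Rightarrow> 'k::zero) \<Rightarrow> ereal" where
  "ord_eta \<omega> \<eta> f = (INF \<beta>\<in>{\<beta>. f \<beta> \<noteq> (\<lambda>_. 0)}. ord_w \<omega> (f \<beta>) + edot \<eta> \<beta>)"

definition in_eta :: "('n::finite \<Rightarrow> real) \<Rightarrow> ('m::finite \<Rightarrow> ereal)
     \<Rightarrow> (('m \<Rightarrow> nat) \<Rightarrow> ('n \<Rightarrow> rat) \<Rightarrow> 'k::zero) \<Rightarrow> ('m \<Rightarrow> nat) \<Rightarrow> ('n \<Rightarrow> rat) \<Rightarrow> 'k" where
  "in_eta \<omega> \<eta> f = (\<lambda>\<beta>. if f \<beta> \<noteq> (\<lambda>_. 0) \<and> ord_w \<omega> (f \<beta>) + edot \<eta> \<beta> = ord_eta \<omega> \<eta> f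
                          then in_w \<omega> (f \<beta>) else (\<lambda>_. 0))"

definition In_eta :: "('n::finite \<Rightarrow> real) \<Rightarrow> ('m::finite \<Rightarrow> ereal)
     \<Rightarrow> (('m \<Rightarrow> nat) \<Rightarrow> ('n \<Rightarrow> rat) \<Rightarrow> 'k::comm_ring_1) set \<Rightarrow> (('m \<Rightarrow> nat) \<Rightarrow> ('n \<Rightarrow> rat) \<Rightarrow> 'k) set" where
  "In_eta \<omega> \<eta> J = gen_ideal (spoly \<omega>)
      ({in_eta \<omega> \<eta> f | f. f \<in> J \<and> ord_eta \<omega> \<eta> f < \<infinity>} \<union> {yvar i | i. \<eta> i = \<infinity>})"

definition ord_weta :: "('n::finite \<Rightarrow> real) \<Rightarrow> ('m::finite \<Rightarrow> ereal)
     \<Rightarrow> (('m \<Rightarrow> nat) \<Rightarrow> ('n \<Rightarrow> rat) \<Rightarrow> 'k::zero) \<Rightarrow> ereal" where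
  "ord_weta \<omega> \<eta> f = (INF (\<beta>, \<alpha>)\<in>{(\<beta>, \<alpha>). f \<beta> \<alpha> \<noteq> 0}. ereal (wdot \<omega> \<alpha>) + edot \<eta> \<beta>)"

definition in_weta :: "('n::finite \<Rightarrow> real) \<Rightarrow> ('m::finite \<Rightarrow> ereal)
     \<Rightarrow> (('m \<Rightarrow> nat) \<Rightarrow> ('n \<Rightarrow> rat) \<Rightarrow> 'k::zero) \<Rightarrow> ('m \<Rightarrow> nat) \<Rightarrow> ('n \<Rightarrow> rat) \<Rightarrow> 'k" where
  "in_weta \<omega> \<eta> f = (\<lambda>\<beta> \<alpha>. if ord_weta \<omega> \<eta> f < \<infinity> \<and> f \<beta> \<alpha> \<noteq> 0 \<and>
                              ereal (wdot \<omega> \<alpha>) + edot \<eta> \<beta> = ord_weta \<omega> \<eta> f then f \<beta> \<alpha> else 0)"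

definition In_weta :: "('n::finite \<Rightarrow> real) \<Rightarrow> ('m::finite \<Rightarrow> ereal)
     \<Rightarrow> (('m \<Rightarrow> nat) \<Rightarrow> ('n \<Rightarrow> rat) \<Rightarrow> 'k::comm_ring_1) set \<Rightarrow> (('m \<Rightarrow> nat) \<Rightarrow> ('n \<Rightarrow> rat) \<Rightarrow> 'k) set" where
  "In_weta \<omega> \<eta> I = gen_ideal laurent
      ({in_weta \<omega> \<eta> f | f. f \<in> I} \<union> {yvar i | i. \<eta> i = \<infinity>})"

end

theory Submission
  imports Defs
begin

text \<open>
  Write \<open>val \<beta> \<alpha> = \<omega>\<cdot>\<alpha> + \<eta>\<cdot>\<beta>\<close> for the value of the monomial \<open>x\<^sup>\<alpha> y\<^sup>\<beta>\<close>. Since \<open>\<eta>\<close> has no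
  entry \<open>-\<infinity>\<close>, the order and initial form of an element of \<open>S\<^sub>\<omega>[y]\<close> with respect to \<open>\<eta>\<close>
  are the minimum of \<open>val\<close> over its support and the sum of its terms of minimal value; so
  for \<open>f \<in> \<I>\<close> the generator \<open>in\<^sub>\<omega>\<^sub>,\<^sub>\<eta> f\<close> equals \<open>in\<^sub>\<eta> f\<close>, which gives the inclusion
  \<open>(In\<^sub>\<omega>\<^sub>,\<^sub>\<eta> \<I>)\<^sup>e \<subseteq> In\<^sub>\<eta>(\<I>\<^sup>e)\<close>.

  Conversely let \<open>g = \<Sum> \<phi>\<^sub>i f\<^sub>i\<close> with \<open>\<phi>\<^sub>i \<in> S\<^sub>\<omega>[y]\<close>, \<open>f\<^sub>i \<in> \<I>\<close>, have finite order \<open>m\<close>. As the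
  coordinates of \<open>\<omega>\<close> are linearly independent over \<open>\<rat>\<close>, an \<open>\<omega>\<close>-positive Puiseux series has
  only finitely many terms below any given value. Truncating every \<open>\<phi>\<^sub>i\<close> above a value \<open>C\<close>
  chosen so large that the discarded products have value \<open>> m\<close>, we get a finitely
  supported \<open>G = \<Sum> P\<^sub>i f\<^sub>i\<close> with \<open>in\<^sub>\<eta> g = in\<^sub>\<eta> G\<close>. Grouping the terms of \<open>G\<close> by the class of
  their \<open>x\<close>-exponent modulo \<open>\<int>\<^sup>N\<close> writes \<open>G = \<Sum>\<^sub>r x\<^sup>r G\<^sub>r\<close> with every \<open>G\<^sub>r \<in> \<I>\<close>, because
  multiplication by a Laurent polynomial preserves these classes; different classes do not
  interact, so \<open>in\<^sub>\<eta> G\<close> is the sum of those \<open>x\<^sup>r in\<^sub>\<omega>\<^sub>,\<^sub>\<eta> G\<^sub>r\<close> whose value is \<open>m\<close>.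
\<close>

type_synonym ('m, 'n, 'k) xy_series = "('m \<Rightarrow> nat) \<Rightarrow> ('n \<Rightarrow> rat) \<Rightarrow> 'k"

lemma sum_fun_apply: "(sum f A) x = sum (\<lambda>a. f a x) A"
  by (induction A rule: infinite_finite_induct) auto

lemma le_fun_diff_self: "(\<beta> :: 'm \<Rightarrow> nat) - b \<le> \<beta>"
  by (simp add: le_fun_def)

lemma fun_diff_add_cancel: "(b :: 'm \<Rightarrow> nat) \<le> \<beta> \<Longrightarrow> \<beta> - b + b = \<beta>"
  by (simp add: fun_eq_iff le_fun_def)

lemma le_fun_diff_conv: "(b :: 'm \<Rightarrow> nat) \<le> \<beta> \<Longrightarrow> t \<le> \<beta> - b \<longleftrightarrow> t + b \<le> \<beta>"
  by (simp add: le_fun_def le_diff_conv2)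

lemma le_fun_add_self: "(t :: 'm \<Rightarrow> nat) \<le> b + t"
  by (simp add: le_fun_def)

lemma le_fun_add_left_imp: "(b :: 'm \<Rightarrow> nat) + t \<le> \<beta> \<Longrightarrow> t \<le> \<beta>"
  using le_fun_add_self order_trans by blast

lemma fun_diff_diff_cancel: "(b :: 'm \<Rightarrow> nat) \<le> \<beta> \<Longrightarrow> \<beta> - (\<beta> - b) = b"
  by (simp add: fun_eq_iff le_fun_def)

lemma fun_diff_eq_iff: "(b :: 'm \<Rightarrow> nat) \<le> \<beta> \<Longrightarrow> t \<le> \<beta> \<Longrightarrow> \<beta> - b = t \<longleftrightarrow> b = \<beta> - t"
proof
  assume "b \<le> \<beta>" "\<beta> - b = t"
  then show "b = \<beta> - t" using fun_diff_diff_cancel[of b \<beta>] by simp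
next
  assume "t \<le> \<beta>" "b = \<beta> - t"
  then show "\<beta> - b = t" using fun_diff_diff_cancel[of t \<beta>] by simp
qed

definition supp :: "('m, 'n, 'k::zero) xy_series \<Rightarrow> (('m \<Rightarrow> nat) \<times> ('n \<Rightarrow> rat)) set" where
  "supp f = {(b, a). f b a \<noteq> 0}"

lemma supp_zero [simp]: "supp 0 = {}"
  by (simp add: supp_def)

lemma finite_supp_add:
  fixes f g :: "('m, 'n, 'k::comm_monoid_add) xy_series"
  assumes "finite (supp f)" "finite (supp g)"
  shows "finite (supp (f + g))"
proof -
  have "supp (f + g) \<subseteq> supp f \<union> supp g" by (auto simp: supp_def)
  then show ?thesis using assms finite_subset by blast
qed

lemma finite_supp_sum:
  fixes F :: "'s \<Rightarrow> ('m, 'n, 'k::comm_monoid_add) xy_series"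
  shows "finite S \<Longrightarrow> (\<And>s. s \<in> S \<Longrightarrow> finite (supp (F s))) \<Longrightarrow> finite (supp (\<Sum>s\<in>S. F s))"
  by (induction S rule: finite_induct) (simp_all add: finite_supp_add)

lemma laurent_finite_supp: "laurent f \<Longrightarrow> finite (supp f)"
  unfolding laurent_def supp_def by blast

lemma pmult_eq_sum_over:
  fixes f h :: "('m, 'n, 'k::comm_ring_1) xy_series"
  assumes "finite A" "supp h \<subseteq> A"
  shows "pmult f h \<beta> \<alpha> = (\<Sum>p\<in>{p\<in>A. fst p \<le> \<beta>}. f (\<beta> - fst p) (\<alpha> - snd p) * h (fst p) (snd p))"
proof -
  let ?S = "{(\<beta>1, \<alpha>1). \<beta>1 \<le> \<beta> \<and> f \<beta>1 \<alpha>1 \<noteq> 0 \<and> h (\<beta> - \<beta>1) (\<alpha> - \<alpha>1) \<noteq> 0}"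
  let ?T = "{p\<in>A. fst p \<le> \<beta> \<and> f (\<beta> - fst p) (\<alpha> - snd p) \<noteq> 0 \<and> h (fst p) (snd p) \<noteq> 0}"
  have "pmult f h \<beta> \<alpha> = (\<Sum>(\<beta>1, \<alpha>1)\<in>?S. f \<beta>1 \<alpha>1 * h (\<beta> - \<beta>1) (\<alpha> - \<alpha>1))"
    by (simp add: pmult_def)
  also have "\<dots> = (\<Sum>p\<in>?T. f (\<beta> - fst p) (\<alpha> - snd p) * h (fst p) (snd p))"
    by (rule sum.reindex_bij_witness[where i="\<lambda>p. (\<beta> - fst p, \<alpha> - snd p)"
          and j="\<lambda>p. (\<beta> - fst p, \<alpha> - snd p)"])
      (use assms(2) in \<open>auto simp: supp_def fun_diff_diff_cancel le_fun_diff_self\<close>)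
  also have "\<dots> = (\<Sum>p\<in>{p\<in>A. fst p \<le> \<beta>}. f (\<beta> - fst p) (\<alpha> - snd p) * h (fst p) (snd p))"
    by (rule sum.mono_neutral_left) (use assms(1) in auto)
  finally show ?thesis .
qed

lemma pmult_eq_sum_supp:
  fixes f h :: "('m, 'n, 'k::comm_ring_1) xy_series"
  assumes "finite (supp h)"
  shows "pmult f h \<beta> \<alpha> = (\<Sum>p\<in>{p\<in>supp h. fst p \<le> \<beta>}. f (\<beta> - fst p) (\<alpha> - snd p) * h (fst p) (snd p))"
  using assms by (rule pmult_eq_sum_over) simp

lemma pmult_zero_right: "pmult f 0 = 0"
  by (auto simp: fun_eq_iff pmult_def)

lemma pmult_add_left:
  "finite (supp h) \<Longrightarrow> pmult (f1 + f2) h = pmult f1 h + pmult f2 (h :: ('m, 'n, 'k::comm_ring_1) xy_series)"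
  by (auto simp: fun_eq_iff pmult_eq_sum_supp distrib_right sum.distrib)

lemma pmult_zero_left: "finite (supp h) \<Longrightarrow> pmult 0 h = 0"
  by (auto simp: fun_eq_iff pmult_eq_sum_supp)

lemma pmult_sum_left:
  fixes h :: "('m, 'n, 'k::comm_ring_1) xy_series"
  assumes "finite (supp h)"
  shows "pmult (\<Sum>s\<in>S. F s) h = (\<Sum>s\<in>S. pmult (F s) h)"
proof (induction S rule: infinite_finite_induct)
  case (infinite A)
  then show ?case by (simp only: sum.infinite[OF infinite] pmult_zero_left[OF assms])
next
  case empty
  show ?case by (simp only: sum.empty pmult_zero_left[OF assms])
next
  case (insert x T)
  then show ?case by (simp only: sum.insert[OF insert(1,2)] pmult_add_left[OF assms])
qed

lemma pmult_add_right:
  fixes f h1 h2 :: "('m, 'n, 'k::comm_ring_1) xy_series"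
  assumes "finite (supp h1)" "finite (supp h2)"
  shows "pmult f (h1 + h2) = pmult f h1 + pmult f h2"
proof -
  let ?A = "supp h1 \<union> supp h2"
  have A: "finite ?A" using assms by simp
  have "supp (h1 + h2) \<subseteq> ?A" "supp h1 \<subseteq> ?A" "supp h2 \<subseteq> ?A" by (auto simp: supp_def)
  then show ?thesis
    by (auto simp: fun_eq_iff pmult_eq_sum_over[OF A] distrib_left sum.distrib)
qed

lemma pmult_sum_right:
  fixes f :: "('m, 'n, 'k::comm_ring_1) xy_series"
  assumes "finite S" "\<And>s. s \<in> S \<Longrightarrow> finite (supp (H s))"
  shows "pmult f (\<Sum>s\<in>S. H s) = (\<Sum>s\<in>S. pmult f (H s))"
  using assms
proof (induction S rule: finite_induct)
  case empty
  then show ?case by (simp only: sum.empty pmult_zero_right)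
next
  case (insert x T)
  then have "finite (supp (H x))" "finite (supp (sum H T))" "pmult f (sum H T) = (\<Sum>s\<in>T. pmult f (H s))"
    by (auto intro: finite_supp_sum)
  then show ?case by (simp only: sum.insert[OF insert(1,2)] pmult_add_right)
qed

lemma finite_supp_pmult:
  fixes f h :: "('m, 'n, 'k::comm_ring_1) xy_series"
  assumes "finite (supp f)" "finite (supp h)"
  shows "finite (supp (pmult f h))"
proof (rule finite_subset)
  show "supp (pmult f h) \<subseteq> (\<lambda>(p, q). (fst p + fst q, snd p + snd q)) ` (supp f \<times> supp h)"
  proof
    fix x assume "x \<in> supp (pmult f h)"
    then obtain \<beta> \<alpha> where x: "x = (\<beta>, \<alpha>)" "pmult f h \<beta> \<alpha> \<noteq> 0" by (auto simp: supp_def)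
    then have "(\<Sum>p\<in>{p\<in>supp h. fst p \<le> \<beta>}. f (\<beta> - fst p) (\<alpha> - snd p) * h (fst p) (snd p)) \<noteq> 0"
      by (simp add: pmult_eq_sum_supp[OF assms(2)])
    then obtain p where "p \<in> {p\<in>supp h. fst p \<le> \<beta>}" "f (\<beta> - fst p) (\<alpha> - snd p) * h (fst p) (snd p) \<noteq> 0"
      by (rule sum.not_neutral_contains_not_neutral)
    then show "x \<in> (\<lambda>(p, q). (fst p + fst q, snd p + snd q)) ` (supp f \<times> supp h)"
      using x by (intro image_eqI[of _ _ "((\<beta> - fst p, \<alpha> - snd p), p)"])
        (auto simp: supp_def fun_diff_add_cancel)
  qed
qed (use assms in auto)

text \<open>\<open>shift tb ta f\<close> is the product \<open>x\<^sup>t\<^sup>a y\<^sup>t\<^sup>b f\<close>.\<close>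
definition shift :: "('m \<Rightarrow> nat) \<Rightarrow> ('n \<Rightarrow> rat) \<Rightarrow> ('m, 'n, 'k::zero) xy_series \<Rightarrow> ('m, 'n, 'k) xy_series" where
  "shift tb ta f = (\<lambda>\<beta> \<alpha>. if tb \<le> \<beta> then f (\<beta> - tb) (\<alpha> - ta) else 0)"

definition scale :: "'k::times \<Rightarrow> ('m, 'n, 'k) xy_series \<Rightarrow> ('m, 'n, 'k) xy_series" where
  "scale c f = (\<lambda>\<beta> \<alpha>. c * f \<beta> \<alpha>)"

definition monomial :: "('m \<Rightarrow> nat) \<Rightarrow> ('n \<Rightarrow> rat) \<Rightarrow> 'k::zero \<Rightarrow> ('m, 'n, 'k) xy_series" where
  "monomial tb ta c = (\<lambda>\<beta> \<alpha>. if \<beta> = tb \<and> \<alpha> = ta then c else 0)"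

lemma supp_shift: "supp (shift tb ta h) = (\<lambda>(b, a). (b + tb, a + ta)) ` supp h"
proof safe
  fix b a assume "(b, a) \<in> supp (shift tb ta h)"
  then have "tb \<le> b" "h (b - tb) (a - ta) \<noteq> 0" by (auto simp: supp_def shift_def split: if_splits)
  then show "(b, a) \<in> (\<lambda>(b, a). (b + tb, a + ta)) ` supp h"
    by (intro image_eqI[of _ _ "(b - tb, a - ta)"]) (auto simp: supp_def fun_diff_add_cancel)
qed (auto simp: supp_def shift_def le_fun_def)

lemma finite_supp_shift: "finite (supp h) \<Longrightarrow> finite (supp (shift tb ta h))"
  by (simp add: supp_shift)

lemma supp_scale_subset: "supp (scale c h) \<subseteq> supp (h :: ('m, 'n, 'k::mult_zero) xy_series)"
  by (auto simp: supp_def scale_def)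

lemma finite_supp_scale: "finite (supp h) \<Longrightarrow> finite (supp (scale c (h :: ('m, 'n, 'k::mult_zero) xy_series)))"
  using supp_scale_subset finite_subset by blast

lemma pmult_shift_left:
  fixes f h :: "('m, 'n, 'k::comm_ring_1) xy_series"
  assumes h: "finite (supp h)"
  shows "pmult (shift tb ta f) h = shift tb ta (pmult f h)"
proof (intro ext)
  fix \<beta> \<alpha>
  let ?term = "\<lambda>p. f (\<beta> - tb - fst p) (\<alpha> - ta - snd p) * h (fst p) (snd p)"
  have fin: "finite {p\<in>supp h. fst p \<le> \<beta>}" using h by simp
  show "pmult (shift tb ta f) h \<beta> \<alpha> = shift tb ta (pmult f h) \<beta> \<alpha>"
  proof (cases "tb \<le> \<beta>")
    case True
    have sub: "fst p \<le> \<beta>" if "fst p \<le> \<beta> - tb" for p :: "('m \<Rightarrow> nat) \<times> ('n \<Rightarrow> rat)"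
      using that le_fun_diff_self order_trans by blast
    have shifted: "tb \<le> \<beta> - fst p \<longleftrightarrow> fst p \<le> \<beta> - tb" if "fst p \<le> \<beta>" for p :: "('m \<Rightarrow> nat) \<times> ('n \<Rightarrow> rat)"
      using that True by (simp add: le_fun_diff_conv add.commute)
    have "pmult (shift tb ta f) h \<beta> \<alpha>
        = (\<Sum>p\<in>{p\<in>supp h. fst p \<le> \<beta>}. if fst p \<le> \<beta> - tb then ?term p else 0)"
      unfolding pmult_eq_sum_supp[OF h] shift_def
      by (intro sum.cong refl) (auto simp: shifted Groups.diff_right_commute)
    also have "\<dots> = (\<Sum>p\<in>{p\<in>supp h. fst p \<le> \<beta> - tb}. ?term p)"
      by (rule sum.mono_neutral_cong_right[OF fin]) (auto intro: sub)
    also have "\<dots> = shift tb ta (pmult f h) \<beta> \<alpha>"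
      using True by (simp add: pmult_eq_sum_supp[OF h] shift_def)
    finally show ?thesis .
  next
    case False
    then have "\<not> tb \<le> \<beta> - fst p" for p :: "('m \<Rightarrow> nat) \<times> ('n \<Rightarrow> rat)"
      using le_fun_diff_self order_trans by blast
    then show ?thesis using False
      by (simp add: pmult_eq_sum_supp[OF h] shift_def)
  qed
qed

lemma pmult_shift_right:
  fixes f h :: "('m, 'n, 'k::comm_ring_1) xy_series"
  assumes h: "finite (supp h)"
  shows "pmult f (shift tb ta h) = shift tb ta (pmult f h)"
proof (intro ext)
  fix \<beta> \<alpha>
  let ?g = "\<lambda>(b :: 'm \<Rightarrow> nat, a :: 'n \<Rightarrow> rat). (b + tb, a + ta)"
  have inj: "inj_on ?g S" for S by (auto simp: inj_on_def)
  have "pmult f (shift tb ta h) \<beta> \<alpha>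
      = (\<Sum>p\<in>{p\<in>?g ` supp h. fst p \<le> \<beta>}. f (\<beta> - fst p) (\<alpha> - snd p) * shift tb ta h (fst p) (snd p))"
    by (rule pmult_eq_sum_over) (use h in \<open>auto simp: supp_shift\<close>)
  also have "{p\<in>?g ` supp h. fst p \<le> \<beta>} = ?g ` {q\<in>supp h. fst q + tb \<le> \<beta>}"
    by auto
  also have "(\<Sum>p\<in>?g ` {q\<in>supp h. fst q + tb \<le> \<beta>}. f (\<beta> - fst p) (\<alpha> - snd p) * shift tb ta h (fst p) (snd p))
      = (\<Sum>q\<in>{q\<in>supp h. fst q + tb \<le> \<beta>}. f (\<beta> - (fst q + tb)) (\<alpha> - (snd q + ta)) * h (fst q) (snd q))"
    by (rule sum.reindex_cong[OF inj refl])
      (clarsimp simp: shift_def le_fun_add_self Groups.add_diff_cancel_right')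
  also have "\<dots> = shift tb ta (pmult f h) \<beta> \<alpha>"
  proof (cases "tb \<le> \<beta>")
    case True
    then show ?thesis
      by (simp add: pmult_eq_sum_supp[OF h] shift_def le_fun_diff_conv Groups.diff_diff_add add.commute)
  next
    case False
    then show ?thesis by (auto simp: shift_def dest: le_fun_add_left_imp intro!: sum.neutral)
  qed
  finally show "pmult f (shift tb ta h) \<beta> \<alpha> = shift tb ta (pmult f h) \<beta> \<alpha>" .
qed

lemma pmult_scale_right:
  fixes f h :: "('m, 'n, 'k::comm_ring_1) xy_series"
  assumes h: "finite (supp h)"
  shows "pmult f (scale c h) = pmult (scale c f) h"
  by (intro ext, simp only: pmult_eq_sum_over[OF h supp_scale_subset] pmult_eq_sum_supp[OF h])
    (simp add: scale_def mult_ac)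

lemma pmult_monomial_left:
  fixes k :: "('m, 'n, 'k::comm_ring_1) xy_series"
  assumes k: "finite (supp k)"
  shows "pmult (monomial tb ta c) k = scale c (shift tb ta k)"
proof (intro ext)
  fix \<beta> \<alpha>
  have fin: "finite {p\<in>supp k. fst p \<le> \<beta>}" using k by simp
  show "pmult (monomial tb ta c) k \<beta> \<alpha> = scale c (shift tb ta k) \<beta> \<alpha>"
  proof (cases "tb \<le> \<beta>")
    case True
    have "pmult (monomial tb ta c) k \<beta> \<alpha>
        = (\<Sum>p\<in>{p\<in>supp k. fst p \<le> \<beta>}. if p = (\<beta> - tb, \<alpha> - ta) then c * k (fst p) (snd p) else 0)"
      unfolding pmult_eq_sum_supp[OF k] monomial_def
      using True by (intro sum.cong refl) (auto simp: fun_diff_eq_iff)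
    also have "\<dots> = (if (\<beta> - tb, \<alpha> - ta) \<in> {p\<in>supp k. fst p \<le> \<beta>} then c * k (\<beta> - tb) (\<alpha> - ta) else 0)"
      by (subst sum.delta[OF fin]) simp
    also have "\<dots> = scale c (shift tb ta k) \<beta> \<alpha>"
      using True by (auto simp: scale_def shift_def supp_def le_fun_diff_self)
    finally show ?thesis .
  next
    case False
    then show ?thesis
      by (auto simp: pmult_eq_sum_supp[OF k] monomial_def scale_def shift_def le_fun_diff_self
          intro!: sum.neutral)
  qed
qed

lemma pmult_one_left: "finite (supp k) \<Longrightarrow> pmult (monomial 0 0 1) k = (k :: ('m, 'n, 'k::comm_ring_1) xy_series)"
  by (simp add: pmult_monomial_left) (simp add: scale_def shift_def)

lemma monomial_decomposition:
  fixes l :: "('m, 'n, 'k::comm_ring_1) xy_series"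
  assumes "finite (supp l)"
  shows "l = (\<Sum>p\<in>supp l. monomial (fst p) (snd p) (l (fst p) (snd p)))"
proof (intro ext)
  fix \<beta> \<alpha>
  have "(\<Sum>p\<in>supp l. monomial (fst p) (snd p) (l (fst p) (snd p))) \<beta> \<alpha>
      = (\<Sum>p\<in>supp l. if p = (\<beta>, \<alpha>) then l (fst p) (snd p) else 0)"
    by (auto simp: sum_fun_apply monomial_def intro: sum.cong)
  also have "\<dots> = l \<beta> \<alpha>" using assms by (simp add: sum.delta supp_def)
  finally show "l \<beta> \<alpha> = (\<Sum>p\<in>supp l. monomial (fst p) (snd p) (l (fst p) (snd p))) \<beta> \<alpha>" by simp
qed

text \<open>Associativity of \<open>pmult\<close> is only established when the middle factor is finitely supported.\<close>
lemma pmult_pmult_eq_sum_shift: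
  fixes \<psi> l k :: "('m, 'n, 'k::comm_ring_1) xy_series"
  assumes l: "finite (supp l)" and k: "finite (supp k)"
  shows "pmult \<psi> (pmult l k)
    = (\<Sum>p\<in>supp l. pmult (shift (fst p) (snd p) (scale (l (fst p) (snd p)) \<psi>)) k)"
proof -
  let ?c = "\<lambda>p. l (fst p) (snd p)"
  have "pmult l k = (\<Sum>p\<in>supp l. pmult (monomial (fst p) (snd p) (?c p)) k)"
    by (subst monomial_decomposition[OF l]) (rule pmult_sum_left[OF k])
  also have "\<dots> = (\<Sum>p\<in>supp l. scale (?c p) (shift (fst p) (snd p) k))"
    by (simp add: pmult_monomial_left[OF k])
  finally have "pmult \<psi> (pmult l k) = (\<Sum>p\<in>supp l. pmult \<psi> (scale (?c p) (shift (fst p) (snd p) k)))"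
    using l k by (simp add: pmult_sum_right finite_supp_scale finite_supp_shift)
  also have "\<dots> = (\<Sum>p\<in>supp l. pmult (shift (fst p) (snd p) (scale (?c p) \<psi>)) k)"
    using k by (simp add: pmult_scale_right finite_supp_shift pmult_shift_right pmult_shift_left)
  finally show ?thesis .
qed

lemma gen_ideal_cases:
  assumes "x \<in> gen_ideal C G"
  obtains n :: nat and g h where "x = (\<Sum>i<n. pmult (g i) (h i))" "\<forall>i<n. C (g i) \<and> h i \<in> G"
  using assms unfolding gen_ideal_def by blast

lemma gen_ideal_zero: "0 \<in> gen_ideal C G"
  unfolding gen_ideal_def by (rule CollectI, rule exI[of _ 0]) auto

lemma gen_ideal_add_pmult:
  assumes "x \<in> gen_ideal C G" "C g" "h \<in> G"
  shows "x + pmult g h \<in> gen_ideal C G"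
proof -
  obtain n :: nat and g1 h1 where x: "x = (\<Sum>i<n. pmult (g1 i) (h1 i))" "\<forall>i<n. C (g1 i) \<and> h1 i \<in> G"
    using assms(1) by (rule gen_ideal_cases)
  have "x + pmult g h = (\<Sum>i<Suc n. pmult ((g1(n := g)) i) ((h1(n := h)) i))"
    unfolding x by (simp add: sum.lessThan_Suc)
  moreover have "\<forall>i<Suc n. C ((g1(n := g)) i) \<and> (h1(n := h)) i \<in> G"
    using x assms by (auto simp: less_Suc_eq)
  ultimately show ?thesis unfolding gen_ideal_def by blast
qed

lemma gen_ideal_pmult: "C g \<Longrightarrow> h \<in> G \<Longrightarrow> pmult g h \<in> gen_ideal C G"
  using gen_ideal_add_pmult[OF gen_ideal_zero] by (metis add_0)

lemma gen_ideal_add: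
  assumes a: "a \<in> gen_ideal C G" and b: "b \<in> gen_ideal C G"
  shows "a + b \<in> gen_ideal C G"
proof -
  obtain n :: nat and g h where b: "b = (\<Sum>i<n. pmult (g i) (h i))" "\<forall>i<n. C (g i) \<and> h i \<in> G"
    using b by (rule gen_ideal_cases)
  have "a + (\<Sum>i<m. pmult (g i) (h i)) \<in> gen_ideal C G" if "m \<le> n" for m
    using that
  proof (induction m)
    case (Suc m)
    have "a + (\<Sum>i<Suc m. pmult (g i) (h i)) = (a + (\<Sum>i<m. pmult (g i) (h i))) + pmult (g m) (h m)"
      by (simp only: sum.lessThan_Suc add.assoc)
    also have "\<dots> \<in> gen_ideal C G"
    proof (rule gen_ideal_add_pmult)
      show "a + (\<Sum>i<m. pmult (g i) (h i)) \<in> gen_ideal C G"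
        using Suc.prems by (intro Suc.IH) simp
      show "C (g m)" "h m \<in> G" using Suc.prems b(2) by auto
    qed
    finally show ?case .
  qed (simp add: a)
  then show ?thesis using b(1) by simp
qed

lemma gen_ideal_sum:
  assumes "\<And>s. s \<in> S \<Longrightarrow> F s \<in> gen_ideal C G"
  shows "(\<Sum>s\<in>S. F s) \<in> gen_ideal C G"
  using assms
proof (induction S rule: infinite_finite_induct)
  case (infinite A)
  then show ?case by (simp only: sum.infinite[OF infinite(1)] gen_ideal_zero)
next
  case empty
  show ?case by (simp only: sum.empty gen_ideal_zero)
next
  case (insert x T)
  then show ?case unfolding sum.insert[OF insert(1,2)] by (blast intro: gen_ideal_add)
qed

lemma gen_ideal_mono_nonzero:
  assumes "G - {0} \<subseteq> H"
  shows "gen_ideal C G \<subseteq> gen_ideal C H"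
proof
  fix x assume "x \<in> gen_ideal C G"
  then obtain n :: nat and g h where x: "x = (\<Sum>i<n. pmult (g i) (h i))" "\<forall>i<n. C (g i) \<and> h i \<in> G"
    by (rule gen_ideal_cases)
  have "pmult (g i) (h i) \<in> gen_ideal C H" if "i < n" for i
    using x(2) that assms by (cases "h i = 0") (auto simp: pmult_zero_right gen_ideal_zero gen_ideal_pmult)
  then show "x \<in> gen_ideal C H" unfolding x(1) by (auto intro: gen_ideal_sum)
qed

lemma laurent_ideal_sum:
  assumes "laurent_ideal I" "\<And>s. s \<in> S \<Longrightarrow> F s \<in> I"
  shows "(\<Sum>s\<in>S. F s) \<in> I"
  using assms(2)
  by (induction S rule: infinite_finite_induct) (use assms(1) in \<open>auto simp: laurent_ideal_def\<close>)

lemma gen_ideal_generator: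
  assumes "C (monomial 0 0 1)" "finite (supp h)" "h \<in> G"
  shows "h \<in> gen_ideal C G"
  using gen_ideal_pmult[of C "monomial 0 0 1" h G, OF assms(1,3)] by (simp add: pmult_one_left[OF assms(2)])

lemma exists_denominator: "\<exists>d::nat. d > 0 \<and> of_nat d * (x::rat) \<in> \<int>"
proof -
  obtain a b where ab: "quotient_of x = (a, b)" by (cases "quotient_of x")
  then have b: "b > 0" by (rule quotient_of_denom_pos)
  have x: "x = of_int a / of_int b" using quotient_of_div[OF ab] .
  have "of_nat (nat b) * x = of_int a" using b x by simp
  then show ?thesis using b by (intro exI[of _ "nat b"]) auto
qed

lemma exists_common_denominator:
  "finite S \<Longrightarrow> \<exists>d::nat. d > 0 \<and> (\<forall>i\<in>S. of_nat d * (q i :: rat) \<in> \<int>)"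
proof (induction S rule: finite_induct)
  case empty
  show ?case by (rule exI[of _ 1]) simp
next
  case (insert x F)
  obtain d where d: "d > 0" "\<forall>i\<in>F. of_nat d * q i \<in> \<int>" using insert.IH by blast
  obtain e where e: "e > 0" "of_nat e * q x \<in> \<int>" using exists_denominator by blast
  show ?case
  proof (intro exI[of _ "d * e"] conjI ballI)
    show "d * e > 0" using d e by simp
    fix i assume i: "i \<in> insert x F"
    have "of_nat (d * e) * q i = of_nat d * (of_nat e * q i)" "of_nat (d * e) * q i = of_nat e * (of_nat d * q i)"
      by (simp_all add: mult_ac)
    then show "of_nat (d * e) * q i \<in> \<int>"
      using i d(2) e(2) Ints_mult[OF Ints_of_nat] by (metis insertE)
  qed
qed

lemma puiseux_zero: "puiseux \<omega> (\<lambda>_. 0)"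
  unfolding puiseux_def by (auto intro: exI[of _ 1] exI[of _ "{}"] simp: rat_cone_def wdot_def)

lemma puiseux_scale: "puiseux \<omega> \<phi> \<Longrightarrow> puiseux \<omega> (\<lambda>\<alpha>. (c::'k::comm_ring_1) * \<phi> \<alpha>)"
  unfolding puiseux_def by (metis mult_zero_right)

lemma puiseux_translate:
  assumes "puiseux \<omega> \<phi>"
  shows "puiseux \<omega> (\<lambda>\<alpha>. \<phi> (\<alpha> - ta))"
proof -
  obtain k where k: "k > 0" "\<forall>\<alpha>. \<phi> \<alpha> \<noteq> 0 \<longrightarrow> (\<forall>i. of_nat k * \<alpha> i \<in> \<int>)"
    using assms unfolding puiseux_def by blast
  obtain \<gamma> V where gV: "finite V" "\<forall>v\<in>rat_cone V. wdot \<omega> v \<ge> 0"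
      "\<forall>\<alpha>. \<phi> \<alpha> \<noteq> 0 \<longrightarrow> (\<lambda>i. \<alpha> i + \<gamma> i) \<in> rat_cone V"
    using assms unfolding puiseux_def by blast
  obtain d where d: "d > 0" "\<forall>i. of_nat d * ta i \<in> \<int>"
    using exists_common_denominator[of UNIV ta] by auto
  have integral: "of_nat (k * d) * \<alpha> i \<in> \<int>" if "\<phi> (\<alpha> - ta) \<noteq> 0" for \<alpha> i
  proof -
    have "of_nat k * (\<alpha> - ta) i \<in> \<int>" using k that by blast
    then have "of_nat k * (\<alpha> i - ta i) \<in> \<int>" by simp
    moreover have "of_nat (k * d) * \<alpha> i = of_nat d * (of_nat k * (\<alpha> i - ta i)) + of_nat k * (of_nat d * ta i)"
      by (simp add: algebra_simps)
    ultimately show ?thesis using d(2) by (metis Ints_add Ints_mult Ints_of_nat)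
  qed
  have cone: "(\<lambda>i. \<alpha> i + (\<gamma> i - ta i)) \<in> rat_cone V" if "\<phi> (\<alpha> - ta) \<noteq> 0" for \<alpha>
  proof -
    have "(\<lambda>i. (\<alpha> - ta) i + \<gamma> i) \<in> rat_cone V" using gV(3) that by blast
    moreover have "(\<lambda>i. (\<alpha> - ta) i + \<gamma> i) = (\<lambda>i. \<alpha> i + (\<gamma> i - ta i))" by (simp add: algebra_simps)
    ultimately show ?thesis by simp
  qed
  show ?thesis
    unfolding puiseux_def
  proof (intro conjI exI[of _ "k * d"] exI[of _ "\<lambda>i. \<gamma> i - ta i"] exI[of _ V] allI impI)
    show "0 < k * d" using k(1) d(1) by simp
    show "of_nat (k * d) * \<alpha> i \<in> \<int>" if "\<phi> (\<alpha> - ta) \<noteq> 0" for \<alpha> i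
      using integral[OF that] .
  qed (simp_all add: gV(1,2) cone)
qed

lemma spoly_shift:
  assumes "spoly \<omega> f"
  shows "spoly \<omega> (shift tb ta f)"
proof -
  have "{\<beta>. shift tb ta f \<beta> \<noteq> (\<lambda>_. 0)} \<subseteq> (\<lambda>b. b + tb) ` {\<beta>. f \<beta> \<noteq> (\<lambda>_. 0)}"
  proof
    fix \<beta> assume "\<beta> \<in> {\<beta>. shift tb ta f \<beta> \<noteq> (\<lambda>_. 0)}"
    then have "tb \<le> \<beta>" "f (\<beta> - tb) \<noteq> (\<lambda>_. 0)" by (auto simp: shift_def fun_eq_iff split: if_splits)
    then show "\<beta> \<in> (\<lambda>b. b + tb) ` {\<beta>. f \<beta> \<noteq> (\<lambda>_. 0)}"
      by (intro image_eqI[of _ _ "\<beta> - tb"]) (auto simp: fun_diff_add_cancel)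
  qed
  then have "finite {\<beta>. shift tb ta f \<beta> \<noteq> (\<lambda>_. 0)}"
    using assms unfolding spoly_def by (meson finite_imageI finite_subset)
  moreover have "puiseux \<omega> (shift tb ta f \<beta>)" for \<beta>
  proof (cases "tb \<le> \<beta>")
    case True
    then have "shift tb ta f \<beta> = (\<lambda>\<alpha>. f (\<beta> - tb) (\<alpha> - ta))" by (simp add: shift_def)
    then show ?thesis using assms puiseux_translate unfolding spoly_def by metis
  next
    case False
    then have "shift tb ta f \<beta> = (\<lambda>_. 0)" by (simp add: shift_def fun_eq_iff)
    then show ?thesis by (simp add: puiseux_zero)
  qed
  ultimately show ?thesis unfolding spoly_def by blast
qed

lemma spoly_scale:
  assumes "spoly \<omega> f"
  shows "spoly \<omega> (scale (c::'k::comm_ring_1) f)"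
proof -
  have "{\<beta>. scale c f \<beta> \<noteq> (\<lambda>_. 0)} \<subseteq> {\<beta>. f \<beta> \<noteq> (\<lambda>_. 0)}" by (force simp: scale_def fun_eq_iff)
  moreover have "puiseux \<omega> (scale c f \<beta>)" for \<beta>
    using assms puiseux_scale[of \<omega> "f \<beta>" c] unfolding spoly_def scale_def by blast
  ultimately show ?thesis using assms unfolding spoly_def by (meson finite_subset)
qed

lemma spoly_monomial_one: "spoly \<omega> (monomial 0 0 1 :: ('m, 'n::finite, 'k::comm_ring_1) xy_series)"
proof -
  let ?one = "monomial 0 0 1 :: ('m, 'n, 'k) xy_series"
  have "{\<beta>. ?one \<beta> \<noteq> (\<lambda>_. 0)} \<subseteq> {0}" by (auto simp: monomial_def fun_eq_iff)
  then have "finite {\<beta>. ?one \<beta> \<noteq> (\<lambda>_. 0)}" using finite_subset by blast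
  moreover have "puiseux \<omega> (?one \<beta>)" for \<beta>
    unfolding puiseux_def
  proof (intro conjI exI[of _ "1::nat"] exI[of _ "\<lambda>_. 0"] exI[of _ "{}"])
    have cone: "rat_cone {} = {\<lambda>_. 0 :: rat}" by (auto simp: rat_cone_def)
    show "\<forall>v\<in>rat_cone {}. 0 \<le> wdot \<omega> v" unfolding cone by (simp add: wdot_def)
    show "\<forall>\<alpha>. ?one \<beta> \<alpha> \<noteq> 0 \<longrightarrow> (\<lambda>i. \<alpha> i + 0) \<in> rat_cone {}"
    proof (intro allI impI)
      fix \<alpha> assume "?one \<beta> \<alpha> \<noteq> 0"
      then have "\<alpha> = 0" by (simp add: monomial_def split: if_splits)
      then show "(\<lambda>i. \<alpha> i + 0) \<in> rat_cone {}" unfolding cone by (simp add: zero_fun_def)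
    qed
  qed (auto simp: monomial_def)
  ultimately show ?thesis unfolding spoly_def by blast
qed

lemma laurent_monomial_one: "laurent (monomial 0 0 1 :: ('m, 'n, 'k::comm_ring_1) xy_series)"
proof -
  have "{(\<beta>, \<alpha>). (monomial 0 0 1 :: ('m, 'n, 'k) xy_series) \<beta> \<alpha> \<noteq> 0} \<subseteq> {(0, 0)}"
    by (auto simp: monomial_def)
  then show ?thesis unfolding laurent_def by (auto simp: monomial_def intro: finite_subset)
qed

lemma finite_supp_yvar: "finite (supp (yvar i :: ('m, 'n, 'k::comm_ring_1) xy_series))"
proof -
  have "supp (yvar i :: ('m, 'n, 'k) xy_series) \<subseteq> {((\<lambda>j. if j = i then 1 else 0), (\<lambda>_. 0))}"
    by (auto simp: supp_def yvar_def split: if_splits)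
  then show ?thesis using finite_subset by blast
qed

subsection \<open>Finiteness of slabs\<close>

lemma wdot_add: "wdot \<omega> (a + b) = wdot \<omega> a + wdot \<omega> b"
  by (simp add: wdot_def of_rat_add distrib_left sum.distrib)

lemma wdot_cone_combination:
  "wdot \<omega> (\<lambda>i. \<Sum>w\<in>V. t w * w i) = (\<Sum>w\<in>V. real_of_rat (t w) * wdot \<omega> w)"
proof -
  have "wdot \<omega> (\<lambda>i. \<Sum>w\<in>V. t w * w i) = (\<Sum>i\<in>UNIV. \<Sum>w\<in>V. real_of_rat (t w) * (\<omega> i * real_of_rat (w i)))"
    unfolding wdot_def by (simp add: of_rat_sum of_rat_mult sum_distrib_left mult_ac)
  also have "\<dots> = (\<Sum>w\<in>V. \<Sum>i\<in>UNIV. real_of_rat (t w) * (\<omega> i * real_of_rat (w i)))"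
    by (rule sum.swap)
  also have "\<dots> = (\<Sum>w\<in>V. real_of_rat (t w) * wdot \<omega> w)"
    unfolding wdot_def by (simp add: sum_distrib_left)
  finally show ?thesis .
qed

lemma generator_in_rat_cone:
  assumes "w \<in> V" "finite V"
  shows "w \<in> rat_cone V"
proof -
  have "(\<Sum>v\<in>V. (if v = w then 1 else 0) * v i) = w i" for i
  proof -
    have "(\<Sum>v\<in>V. (if v = w then 1 else 0) * v i) = (\<Sum>v\<in>V. if v = w then w i else 0)"
      by (intro sum.cong) auto
    also have "\<dots> = w i" using assms by simp
    finally show ?thesis .
  qed
  then show ?thesis unfolding rat_cone_def
    by (intro CollectI exI[of _ "\<lambda>v. if v = w then 1 else 0"]) auto
qed

lemma wdot_pos:
  assumes "rat_lin_indep \<omega>" "wdot \<omega> w \<ge> 0" "w \<noteq> (\<lambda>_. 0)"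
  shows "wdot \<omega> w > 0"
proof -
  have "(\<Sum>i\<in>UNIV. real_of_rat (w i) * \<omega> i) \<noteq> 0" using assms(1,3) unfolding rat_lin_indep_def by blast
  then have "wdot \<omega> w \<noteq> 0" unfolding wdot_def by (simp add: mult_ac)
  then show ?thesis using assms(2) by simp
qed

lemma finite_lattice_box:
  assumes "k > 0"
  shows "finite {\<alpha> :: 'n::finite \<Rightarrow> rat. (\<forall>i. of_nat k * \<alpha> i \<in> \<int>) \<and> (\<forall>i. \<bar>real_of_rat (\<alpha> i)\<bar> \<le> E)}"
proof -
  define K where "K = \<lceil>real k * E\<rceil>"
  let ?Z = "{z :: 'n \<Rightarrow> int. \<forall>i. (i \<in> UNIV \<longrightarrow> z i \<in> {-K..K}) \<and> (i \<notin> UNIV \<longrightarrow> z i = 0)}"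
  have "{\<alpha> :: 'n \<Rightarrow> rat. (\<forall>i. of_nat k * \<alpha> i \<in> \<int>) \<and> (\<forall>i. \<bar>real_of_rat (\<alpha> i)\<bar> \<le> E)}
      \<subseteq> (\<lambda>z i. of_int (z i) / of_nat k) ` ?Z"
  proof
    fix \<alpha> :: "'n \<Rightarrow> rat"
    assume \<alpha>: "\<alpha> \<in> {\<alpha>. (\<forall>i. of_nat k * \<alpha> i \<in> \<int>) \<and> (\<forall>i. \<bar>real_of_rat (\<alpha> i)\<bar> \<le> E)}"
    have "\<forall>i. \<exists>z. of_nat k * \<alpha> i = of_int z" using \<alpha> by (auto elim!: Ints_cases)
    then obtain z where z: "\<And>i. of_nat k * \<alpha> i = of_int (z i)" by metis
    have "z i \<in> {-K..K}" for i
    proof -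
      have "real_of_int (z i) = real k * real_of_rat (\<alpha> i)"
        using arg_cong[OF z[of i], of real_of_rat] by (simp add: of_rat_mult)
      moreover have "\<bar>real k * real_of_rat (\<alpha> i)\<bar> \<le> real k * E"
        using \<alpha> by (simp add: abs_mult mult_left_mono)
      ultimately have "\<bar>real_of_int (z i)\<bar> \<le> real k * E" by simp
      then have "\<bar>real_of_int (z i)\<bar> \<le> real_of_int K"
        unfolding K_def by (meson le_ceiling_iff order_trans le_of_int_ceiling)
      then show ?thesis by (simp add: abs_le_iff)
    qed
    then have "z \<in> ?Z" by auto
    moreover have "\<alpha> = (\<lambda>i. of_int (z i) / of_nat k)"
      using z assms by (auto simp: fun_eq_iff field_simps)
    ultimately show "\<alpha> \<in> (\<lambda>z i. of_int (z i) / of_nat k) ` ?Z" by blast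
  qed
  moreover have "finite ?Z" by (rule finite_set_of_finite_funs) auto
  ultimately show ?thesis using finite_subset by blast
qed

text \<open>By linear independence, \<open>\<omega>\<close> is positive on the nonzero generators of the cone.\<close>
lemma rat_cone_slab_bounded:
  fixes \<omega> :: "'n::finite \<Rightarrow> real"
  assumes li: "rat_lin_indep \<omega>" and V: "finite V" and pos: "\<forall>v\<in>rat_cone V. wdot \<omega> v \<ge> 0"
  shows "\<exists>E. \<forall>v\<in>rat_cone V. wdot \<omega> v \<le> D \<longrightarrow> (\<forall>i. \<bar>real_of_rat (v i)\<bar> \<le> E)"
proof -
  define W where "W = V - {\<lambda>_. 0}"
  have W: "finite W" "W \<subseteq> V" using V by (auto simp: W_def)
  have Wpos: "wdot \<omega> w > 0" if "w \<in> W" for w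
    using that pos generator_in_rat_cone[OF _ V] wdot_pos[OF li] unfolding W_def by blast
  define c where "c = (if W = {} then 1 else Min (wdot \<omega> ` W))"
  have c: "c > 0" "\<And>w. w \<in> W \<Longrightarrow> c \<le> wdot \<omega> w"
    using W Wpos unfolding c_def by auto
  define M where "M = (\<Sum>w\<in>W. \<Sum>i\<in>UNIV. \<bar>real_of_rat (w i)\<bar>)"
  have M: "\<bar>real_of_rat (w i)\<bar> \<le> M" if "w \<in> W" for w i
  proof -
    have "\<bar>real_of_rat (w i)\<bar> \<le> (\<Sum>i\<in>UNIV. \<bar>real_of_rat (w i)\<bar>)" by (rule member_le_sum) auto
    also have "\<dots> \<le> M" unfolding M_def using that W by (intro member_le_sum) (auto intro!: sum_nonneg)
    finally show ?thesis .
  qed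
  have M0: "M \<ge> 0" unfolding M_def by (intro sum_nonneg) auto
  have "\<bar>real_of_rat (v i)\<bar> \<le> D / c * M" if "v \<in> rat_cone V" "wdot \<omega> v \<le> D" for v i
  proof -
    have "\<exists>t. (\<forall>w\<in>V. t w \<ge> 0) \<and> v = (\<lambda>i. \<Sum>w\<in>V. t w * w i)"
      using that(1) by (simp add: rat_cone_def)
    then obtain t where t: "\<forall>w\<in>V. t w \<ge> 0" "v = (\<lambda>i. \<Sum>w\<in>V. t w * w i)"
      by (elim exE conjE)
    have t0: "t w \<ge> 0" if "w \<in> W" for w
      using t(1) W(2) that by (simp add: subset_iff)
    have onW: "(\<Sum>w\<in>V. f w) = (\<Sum>w\<in>W. f w)" if "f (\<lambda>_. 0) = 0" for f :: "('n \<Rightarrow> rat) \<Rightarrow> real"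
      unfolding W_def using that V by (intro sum.mono_neutral_right) auto
    have "c * (\<Sum>w\<in>W. real_of_rat (t w)) = (\<Sum>w\<in>W. real_of_rat (t w) * c)"
      by (simp add: sum_distrib_left mult.commute)
    also have "\<dots> \<le> (\<Sum>w\<in>W. real_of_rat (t w) * wdot \<omega> w)"
      by (rule sum_mono, rule mult_left_mono) (simp_all add: t0 c(2))
    also have "\<dots> = (\<Sum>w\<in>V. real_of_rat (t w) * wdot \<omega> w)"
      by (rule onW[symmetric]) (simp add: wdot_def)
    also have "\<dots> = wdot \<omega> v"
      unfolding t(2) by (rule wdot_cone_combination[symmetric])
    finally have "c * (\<Sum>w\<in>W. real_of_rat (t w)) \<le> D" using that(2) by linarith
    then have tD: "(\<Sum>w\<in>W. real_of_rat (t w)) \<le> D / c" using c(1) by (simp add: field_simps)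
    have "real_of_rat (v i) = (\<Sum>w\<in>V. real_of_rat (t w) * real_of_rat (w i))"
      unfolding t(2) by (simp add: of_rat_sum of_rat_mult)
    also have "\<dots> = (\<Sum>w\<in>W. real_of_rat (t w) * real_of_rat (w i))" by (rule onW) simp
    finally have "\<bar>real_of_rat (v i)\<bar> \<le> (\<Sum>w\<in>W. \<bar>real_of_rat (t w) * real_of_rat (w i)\<bar>)"
      by (simp only: sum_abs)
    also have "\<dots> \<le> (\<Sum>w\<in>W. real_of_rat (t w) * M)"
    proof (rule sum_mono)
      fix w assume w: "w \<in> W"
      have "\<bar>real_of_rat (t w) * real_of_rat (w i)\<bar> = real_of_rat (t w) * \<bar>real_of_rat (w i)\<bar>"
        using t0[OF w] by (simp add: abs_mult)
      also have "\<dots> \<le> real_of_rat (t w) * M" using t0[OF w] M[OF w] by (intro mult_left_mono) simp_all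
      finally show "\<bar>real_of_rat (t w) * real_of_rat (w i)\<bar> \<le> real_of_rat (t w) * M" .
    qed
    also have "\<dots> = (\<Sum>w\<in>W. real_of_rat (t w)) * M" by (simp add: sum_distrib_right)
    also have "\<dots> \<le> D / c * M" using tD M0 by (rule mult_right_mono)
    finally show ?thesis .
  qed
  then show ?thesis by blast
qed

lemma puiseux_slab_finite:
  assumes li: "rat_lin_indep \<omega>" and p: "puiseux \<omega> \<phi>"
  shows "finite {\<alpha>. \<phi> \<alpha> \<noteq> 0 \<and> wdot \<omega> \<alpha> \<le> D}"
proof -
  obtain k where k: "k > 0" "\<forall>\<alpha>. \<phi> \<alpha> \<noteq> 0 \<longrightarrow> (\<forall>i. of_nat k * \<alpha> i \<in> \<int>)"
    using p unfolding puiseux_def by blast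
  obtain \<gamma> V where V: "finite V" "\<forall>v\<in>rat_cone V. wdot \<omega> v \<ge> 0"
      "\<forall>\<alpha>. \<phi> \<alpha> \<noteq> 0 \<longrightarrow> (\<lambda>i. \<alpha> i + \<gamma> i) \<in> rat_cone V"
    using p unfolding puiseux_def by blast
  obtain E where E: "\<And>v i. v \<in> rat_cone V \<Longrightarrow> wdot \<omega> v \<le> D + wdot \<omega> \<gamma> \<Longrightarrow> \<bar>real_of_rat (v i)\<bar> \<le> E"
    using rat_cone_slab_bounded[OF li V(1,2)] by blast
  define E' where "E' = E + (\<Sum>i\<in>UNIV. \<bar>real_of_rat (\<gamma> i)\<bar>)"
  have "\<bar>real_of_rat (\<alpha> i)\<bar> \<le> E'" if "\<phi> \<alpha> \<noteq> 0" "wdot \<omega> \<alpha> \<le> D" for \<alpha> i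
  proof -
    have "wdot \<omega> (\<alpha> + \<gamma>) \<le> D + wdot \<omega> \<gamma>" using that(2) by (simp add: wdot_add)
    then have "\<bar>real_of_rat (\<alpha> i + \<gamma> i)\<bar> \<le> E"
      using E[of "\<alpha> + \<gamma>" i] V(3) that(1) by (simp add: plus_fun_def)
    moreover have "\<bar>real_of_rat (\<gamma> i)\<bar> \<le> (\<Sum>i\<in>UNIV. \<bar>real_of_rat (\<gamma> i)\<bar>)" by (rule member_le_sum) auto
    moreover have "\<bar>real_of_rat (\<alpha> i)\<bar> \<le> \<bar>real_of_rat (\<alpha> i + \<gamma> i)\<bar> + \<bar>real_of_rat (\<gamma> i)\<bar>"
      by (simp only: of_rat_add)
    ultimately show ?thesis unfolding E'_def by linarith
  qed
  then have "{\<alpha>. \<phi> \<alpha> \<noteq> 0 \<and> wdot \<omega> \<alpha> \<le> D}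
      \<subseteq> {\<alpha>. (\<forall>i. of_nat k * \<alpha> i \<in> \<int>) \<and> (\<forall>i. \<bar>real_of_rat (\<alpha> i)\<bar> \<le> E')}"
    using k(2) by blast
  then show ?thesis using finite_lattice_box[OF k(1)] finite_subset by blast
qed


subsection \<open>Orders and initial forms\<close>

definition val :: "('n::finite \<Rightarrow> real) \<Rightarrow> ('m::finite \<Rightarrow> ereal) \<Rightarrow> ('m \<Rightarrow> nat) \<Rightarrow> ('n \<Rightarrow> rat) \<Rightarrow> ereal" where
  "val \<omega> \<eta> \<beta> \<alpha> = ereal (wdot \<omega> \<alpha>) + edot \<eta> \<beta>"

lemma ord_weta_le_val: "f \<beta> \<alpha> \<noteq> 0 \<Longrightarrow> ord_weta \<omega> \<eta> f \<le> val \<omega> \<eta> \<beta> \<alpha>"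
  unfolding ord_weta_def val_def by (rule INF_lower2[of "(\<beta>, \<alpha>)"]) auto

lemma ord_weta_greatest: "(\<And>\<beta> \<alpha>. f \<beta> \<alpha> \<noteq> 0 \<Longrightarrow> c \<le> val \<omega> \<eta> \<beta> \<alpha>) \<Longrightarrow> c \<le> ord_weta \<omega> \<eta> f"
  unfolding ord_weta_def val_def by (rule INF_greatest) auto

lemma ord_w_le: "\<phi> \<alpha> \<noteq> 0 \<Longrightarrow> ord_w \<omega> \<phi> \<le> ereal (wdot \<omega> \<alpha>)"
  unfolding ord_w_def by (rule INF_lower2[of \<alpha>]) auto

lemma ord_eta_le: "f \<beta> \<noteq> (\<lambda>_. 0) \<Longrightarrow> ord_eta \<omega> \<eta> f \<le> ord_w \<omega> (f \<beta>) + edot \<eta> \<beta>"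
  unfolding ord_eta_def by (rule INF_lower2[of \<beta>]) auto

lemma sum_ereal_neq_MInfty: "(\<And>x. x \<in> A \<Longrightarrow> f x \<noteq> -\<infinity>) \<Longrightarrow> sum f A \<noteq> (-\<infinity> :: ereal)"
  by (induction A rule: infinite_finite_induct) auto

lemma edot_neq_MInfty:
  assumes "\<forall>i. \<eta> i \<noteq> -\<infinity>"
  shows "edot \<eta> \<beta> \<noteq> -\<infinity>"
  unfolding edot_def
proof (rule sum_ereal_neq_MInfty)
  fix i
  show "(if \<beta> i = 0 then 0 else \<eta> i * ereal (real (\<beta> i))) \<noteq> -\<infinity>"
    using assms by (cases "\<eta> i") auto
qed

lemma val_neq_MInfty: "\<forall>i. \<eta> i \<noteq> -\<infinity> \<Longrightarrow> val \<omega> \<eta> \<beta> \<alpha> \<noteq> -\<infinity>"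
  unfolding val_def using edot_neq_MInfty by (metis ereal_plus_eq_MInfty MInfty_neq_ereal(1))

lemma ord_eta_eq_ord_weta:
  assumes eta: "\<forall>i. \<eta> i \<noteq> -\<infinity>"
  shows "ord_eta \<omega> \<eta> f = ord_weta \<omega> \<eta> f"
proof (rule antisym)
  show "ord_eta \<omega> \<eta> f \<le> ord_weta \<omega> \<eta> f"
  proof (rule ord_weta_greatest)
    fix \<beta> \<alpha> assume nz: "f \<beta> \<alpha> \<noteq> 0"
    then have "ord_eta \<omega> \<eta> f \<le> ord_w \<omega> (f \<beta>) + edot \<eta> \<beta>" by (intro ord_eta_le) auto
    also have "\<dots> \<le> ereal (wdot \<omega> \<alpha>) + edot \<eta> \<beta>" using nz by (intro add_right_mono ord_w_le)
    finally show "ord_eta \<omega> \<eta> f \<le> val \<omega> \<eta> \<beta> \<alpha>" by (simp add: val_def)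
  qed
next
  show "ord_weta \<omega> \<eta> f \<le> ord_eta \<omega> \<eta> f"
    unfolding ord_eta_def
  proof (rule INF_greatest)
    fix \<beta> assume "\<beta> \<in> {\<beta>. f \<beta> \<noteq> (\<lambda>_. 0)}"
    show "ord_weta \<omega> \<eta> f \<le> ord_w \<omega> (f \<beta>) + edot \<eta> \<beta>"
    proof (cases "edot \<eta> \<beta>")
      case (real r)
      have "ord_weta \<omega> \<eta> f - ereal r \<le> ord_w \<omega> (f \<beta>)"
        unfolding ord_w_def
      proof (rule INF_greatest)
        fix \<alpha> assume "\<alpha> \<in> {\<alpha>. f \<beta> \<alpha> \<noteq> 0}"
        then have "ord_weta \<omega> \<eta> f \<le> ereal (wdot \<omega> \<alpha>) + ereal r"
          using ord_weta_le_val[of f \<beta> \<alpha> \<omega> \<eta>] real by (simp add: val_def)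
        then show "ord_weta \<omega> \<eta> f - ereal r \<le> ereal (wdot \<omega> \<alpha>)" by (simp add: ereal_minus_le)
      qed
      then show ?thesis using real by (simp add: ereal_minus_le)
    qed (use edot_neq_MInfty[OF eta] in auto)
  qed
qed

lemma in_eta_eq_in_weta:
  assumes eta: "\<forall>i. \<eta> i \<noteq> -\<infinity>" and fin: "ord_eta \<omega> \<eta> f < \<infinity>"
  shows "in_eta \<omega> \<eta> f = in_weta \<omega> \<eta> f"
proof (intro ext)
  fix \<beta> \<alpha>
  let ?m = "ord_weta \<omega> \<eta> f"
  have m: "ord_eta \<omega> \<eta> f = ?m" by (rule ord_eta_eq_ord_weta[OF eta])
  have minimal: "f \<beta> \<noteq> (\<lambda>_. 0) \<and> ord_w \<omega> (f \<beta>) + edot \<eta> \<beta> = ?m \<and> ereal (wdot \<omega> \<alpha>) = ord_w \<omega> (f \<beta>)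
      \<longleftrightarrow> ereal (wdot \<omega> \<alpha>) + edot \<eta> \<beta> = ?m" if nz: "f \<beta> \<alpha> \<noteq> 0"
  proof
    assume eq: "ereal (wdot \<omega> \<alpha>) + edot \<eta> \<beta> = ?m"
    have fb: "f \<beta> \<noteq> (\<lambda>_. 0)" using nz by auto
    obtain r where r: "edot \<eta> \<beta> = ereal r"
      using eq fin m edot_neq_MInfty[OF eta, of \<beta>] by (cases "edot \<eta> \<beta>") auto
    have "?m \<le> ord_w \<omega> (f \<beta>) + ereal r" using ord_eta_le[of f \<beta> \<omega> \<eta>, OF fb] m r by simp
    moreover have "ord_w \<omega> (f \<beta>) \<le> ereal (wdot \<omega> \<alpha>)" using nz by (rule ord_w_le)
    ultimately have "ord_w \<omega> (f \<beta>) + ereal r = ereal (wdot \<omega> \<alpha>) + ereal r"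
      using eq r by (metis add_right_mono antisym)
    then have "ord_w \<omega> (f \<beta>) = ereal (wdot \<omega> \<alpha>)"
      by (cases "ord_w \<omega> (f \<beta>)") auto
    then show "f \<beta> \<noteq> (\<lambda>_. 0) \<and> ord_w \<omega> (f \<beta>) + edot \<eta> \<beta> = ?m \<and> ereal (wdot \<omega> \<alpha>) = ord_w \<omega> (f \<beta>)"
      using fb eq by simp
  qed simp
  show "in_eta \<omega> \<eta> f \<beta> \<alpha> = in_weta \<omega> \<eta> f \<beta> \<alpha>"
    using minimal fin m unfolding in_eta_def in_w_def in_weta_def by (auto split: if_splits)
qed

lemma in_weta_eq:
  "ord_weta \<omega> \<eta> f = ereal c
    \<Longrightarrow> in_weta \<omega> \<eta> f \<beta> \<alpha> = (if f \<beta> \<alpha> \<noteq> 0 \<and> val \<omega> \<eta> \<beta> \<alpha> = ereal c then f \<beta> \<alpha> else 0)"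
  unfolding in_weta_def val_def by simp

lemma finite_supp_in_weta:
  assumes "finite (supp f)"
  shows "finite (supp (in_weta \<omega> \<eta> f))"
proof -
  have "supp (in_weta \<omega> \<eta> f) \<subseteq> supp f" by (auto simp: supp_def in_weta_def split: if_splits)
  then show ?thesis using assms finite_subset by blast
qed

subsection \<open>The inclusion of the extended initial ideal\<close>

lemma ext_ideal_contains:
  assumes "laurent_ideal I" "f \<in> I"
  shows "f \<in> ext_ideal \<omega> I"
  unfolding ext_ideal_def
  using assms laurent_finite_supp spoly_monomial_one
  by (intro gen_ideal_generator) (auto simp: laurent_ideal_def)

lemma ext_gen_ideal_laurent_subset:
  assumes G: "\<forall>k\<in>G. finite (supp k)"
  shows "gen_ideal (spoly \<omega>) (gen_ideal laurent G) \<subseteq> gen_ideal (spoly \<omega>) G"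
proof
  have product: "pmult \<psi> (pmult l k) \<in> gen_ideal (spoly \<omega>) G"
    if \<psi>: "spoly \<omega> \<psi>" and l: "laurent l" and k: "k \<in> G" for \<psi> l k
  proof -
    have "finite (supp l)" "finite (supp k)" using l k G laurent_finite_supp by auto
    then have "pmult \<psi> (pmult l k)
        = (\<Sum>p\<in>supp l. pmult (shift (fst p) (snd p) (scale (l (fst p) (snd p)) \<psi>)) k)"
      by (rule pmult_pmult_eq_sum_shift)
    also have "\<dots> \<in> gen_ideal (spoly \<omega>) G"
      by (intro gen_ideal_sum gen_ideal_pmult spoly_shift spoly_scale \<psi> k)
    finally show ?thesis .
  qed
  have summand: "pmult \<psi> h \<in> gen_ideal (spoly \<omega>) G"
    if \<psi>: "spoly \<omega> \<psi>" and h: "h \<in> gen_ideal laurent G" for \<psi> h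
  proof -
    obtain n :: nat and l k where lk: "h = (\<Sum>i<n. pmult (l i) (k i))" "\<forall>i<n. laurent (l i) \<and> k i \<in> G"
      using h by (rule gen_ideal_cases)
    have "pmult \<psi> h = (\<Sum>i<n. pmult \<psi> (pmult (l i) (k i)))"
      unfolding lk(1) using lk(2) G
      by (intro pmult_sum_right) (auto intro: finite_supp_pmult laurent_finite_supp)
    also have "\<dots> \<in> gen_ideal (spoly \<omega>) G"
      using lk(2) by (intro gen_ideal_sum product \<psi>) auto
    finally show ?thesis .
  qed
  fix x assume "x \<in> gen_ideal (spoly \<omega>) (gen_ideal laurent G)"
  then obtain n :: nat and \<psi> h where "x = (\<Sum>i<n. pmult (\<psi> i) (h i))"
      "\<forall>i<n. spoly \<omega> (\<psi> i) \<and> h i \<in> gen_ideal laurent G"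
    by (rule gen_ideal_cases)
  then show "x \<in> gen_ideal (spoly \<omega>) G" by (auto intro!: gen_ideal_sum summand)
qed

lemma ext_In_weta_subset_In_eta_ext:
  assumes eta: "\<forall>i. \<eta> i \<noteq> -\<infinity>" and I: "laurent_ideal I"
  shows "ext_ideal \<omega> (In_weta \<omega> \<eta> I) \<subseteq> In_eta \<omega> \<eta> (ext_ideal \<omega> I)"
proof -
  let ?G = "{in_weta \<omega> \<eta> f | f. f \<in> I} \<union> {yvar i | i. \<eta> i = \<infinity>}"
  have "\<forall>k\<in>?G. finite (supp k)"
    using I by (auto simp: laurent_ideal_def intro: finite_supp_in_weta laurent_finite_supp finite_supp_yvar)
  then have "ext_ideal \<omega> (In_weta \<omega> \<eta> I) \<subseteq> gen_ideal (spoly \<omega>) ?G"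
    unfolding ext_ideal_def In_weta_def by (rule ext_gen_ideal_laurent_subset)
  also have "\<dots> \<subseteq> In_eta \<omega> \<eta> (ext_ideal \<omega> I)"
    unfolding In_eta_def
  proof (rule gen_ideal_mono_nonzero, rule subsetI)
    fix k assume k: "k \<in> ?G - {0}"
    then have "k \<noteq> 0" "(\<exists>f. f \<in> I \<and> k = in_weta \<omega> \<eta> f) \<or> (\<exists>i. \<eta> i = \<infinity> \<and> k = yvar i)"
      by blast+
    then consider f where "f \<in> I" "k = in_weta \<omega> \<eta> f" "k \<noteq> 0" | i where "\<eta> i = \<infinity>" "k = yvar i"
      by (elim disjE exE conjE) simp_all
    then show "k \<in> {in_eta \<omega> \<eta> f |f. f \<in> ext_ideal \<omega> I \<and> ord_eta \<omega> \<eta> f < \<infinity>} \<union> {yvar i |i. \<eta> i = \<infinity>}"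
    proof cases
      case (1 f)
      then have "ord_weta \<omega> \<eta> f < \<infinity>" by (auto simp: in_weta_def fun_eq_iff)
      moreover have "ord_eta \<omega> \<eta> f = ord_weta \<omega> \<eta> f" by (rule ord_eta_eq_ord_weta[OF eta])
      ultimately have fin: "ord_eta \<omega> \<eta> f < \<infinity>" by simp
      then have "k = in_eta \<omega> \<eta> f" using 1(2) in_eta_eq_in_weta[OF eta fin] by simp
      then show ?thesis using ext_ideal_contains[OF I 1(1), of \<omega>] fin by blast
    next
      case (2 i)
      then show ?thesis by blast
    qed
  qed
  finally show ?thesis .
qed


lemma ereal_add_real_eq_iff: "x + ereal w = ereal m \<longleftrightarrow> x = ereal (m - w)"
  by (cases x) auto

lemma edot_add: "edot \<eta> (b1 + b2) = edot \<eta> b1 + edot \<eta> b2"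
proof -
  have edot: "edot \<eta> \<beta> = (\<Sum>i\<in>UNIV. \<eta> i * ereal (real (\<beta> i)))" for \<beta>
    unfolding edot_def by (intro sum.cong) (auto simp: zero_ereal_def[symmetric])
  have "\<eta> i * ereal (real ((b1 + b2) i)) = \<eta> i * ereal (real (b1 i)) + \<eta> i * ereal (real (b2 i))" for i
    using ereal_right_distrib[of "ereal (real (b1 i))" "ereal (real (b2 i))" "\<eta> i"] by simp
  then show ?thesis unfolding edot by (simp add: sum.distrib)
qed

lemma val_add: "val \<omega> \<eta> (b1 + b2) (a1 + a2) = val \<omega> \<eta> b1 a1 + val \<omega> \<eta> b2 a2"
  unfolding val_def by (simp add: edot_add wdot_add ac_simps)

lemma val_add_x: "val \<omega> \<eta> \<beta> (\<alpha> + r) = val \<omega> \<eta> \<beta> \<alpha> + ereal (wdot \<omega> r)"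
  unfolding val_def by (simp add: wdot_add ac_simps)

lemma val_gt_of_pmult_nonzero:
  fixes Q f :: "('m::finite, 'n::finite, 'k::comm_ring_1) xy_series"
  assumes eta: "\<forall>i. \<eta> i \<noteq> -\<infinity>" and f: "finite (supp f)"
    and Q: "\<And>b a. Q b a \<noteq> 0 \<Longrightarrow> ereal C < val \<omega> \<eta> b a"
    and f_ge: "\<And>b a. f b a \<noteq> 0 \<Longrightarrow> ereal L \<le> val \<omega> \<eta> b a"
    and nz: "pmult Q f \<beta> \<alpha> \<noteq> 0"
  shows "ereal (C + L) < val \<omega> \<eta> \<beta> \<alpha>"
proof -
  have "(\<Sum>p\<in>{p\<in>supp f. fst p \<le> \<beta>}. Q (\<beta> - fst p) (\<alpha> - snd p) * f (fst p) (snd p)) \<noteq> 0"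
    using nz by (simp add: pmult_eq_sum_supp[OF f])
  then obtain p where p: "p \<in> {p\<in>supp f. fst p \<le> \<beta>}" "Q (\<beta> - fst p) (\<alpha> - snd p) * f (fst p) (snd p) \<noteq> 0"
    by (rule sum.not_neutral_contains_not_neutral)
  have "val \<omega> \<eta> \<beta> \<alpha> = val \<omega> \<eta> ((\<beta> - fst p) + fst p) ((\<alpha> - snd p) + snd p)"
    using p(1) by (simp add: fun_diff_add_cancel)
  also have "\<dots> = val \<omega> \<eta> (\<beta> - fst p) (\<alpha> - snd p) + val \<omega> \<eta> (fst p) (snd p)" by (rule val_add)
  finally have "val \<omega> \<eta> \<beta> \<alpha> = val \<omega> \<eta> (\<beta> - fst p) (\<alpha> - snd p) + val \<omega> \<eta> (fst p) (snd p)" .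
  moreover from p(2) have "Q (\<beta> - fst p) (\<alpha> - snd p) \<noteq> 0" "f (fst p) (snd p) \<noteq> 0" by auto
  then have "ereal C < val \<omega> \<eta> (\<beta> - fst p) (\<alpha> - snd p)" "ereal L \<le> val \<omega> \<eta> (fst p) (snd p)"
    by (simp_all add: Q f_ge)
  moreover have "val \<omega> \<eta> (fst p) (snd p) \<noteq> -\<infinity>" by (rule val_neq_MInfty[OF eta])
  ultimately show ?thesis
    by (cases "val \<omega> \<eta> (\<beta> - fst p) (\<alpha> - snd p)"; cases "val \<omega> \<eta> (fst p) (snd p)") auto
qed

lemma val_bounded_below:
  assumes "finite U" "\<forall>i. \<eta> i \<noteq> -\<infinity>"
  shows "\<exists>L. \<forall>(b, a)\<in>U. ereal L \<le> val \<omega> \<eta> b a"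
proof -
  define L where "L = Min (insert 0 ((\<lambda>(b, a). real_of_ereal (val \<omega> \<eta> b a)) ` U))"
  have "ereal L \<le> val \<omega> \<eta> b a" if "(b, a) \<in> U" for b a
  proof (cases "val \<omega> \<eta> b a")
    case (real v)
    have "L \<le> real_of_ereal (val \<omega> \<eta> b a)" unfolding L_def using assms(1) that by (intro Min_le) auto
    then show ?thesis using real by simp
  qed (use val_neq_MInfty[OF assms(2)] in auto)
  then show ?thesis by blast
qed

definition low_part :: "('n::finite \<Rightarrow> real) \<Rightarrow> ('m::finite \<Rightarrow> ereal) \<Rightarrow> real
    \<Rightarrow> ('m, 'n, 'k::zero) xy_series \<Rightarrow> ('m, 'n, 'k) xy_series" where
  "low_part \<omega> \<eta> C \<phi> = (\<lambda>\<beta> \<alpha>. if val \<omega> \<eta> \<beta> \<alpha> \<le> ereal C then \<phi> \<beta> \<alpha> else 0)"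

definition high_part :: "('n::finite \<Rightarrow> real) \<Rightarrow> ('m::finite \<Rightarrow> ereal) \<Rightarrow> real
    \<Rightarrow> ('m, 'n, 'k::zero) xy_series \<Rightarrow> ('m, 'n, 'k) xy_series" where
  "high_part \<omega> \<eta> C \<phi> = (\<lambda>\<beta> \<alpha>. if val \<omega> \<eta> \<beta> \<alpha> \<le> ereal C then 0 else \<phi> \<beta> \<alpha>)"

lemma low_part_add_high_part:
  "low_part \<omega> \<eta> C \<phi> + high_part \<omega> \<eta> C \<phi> = (\<phi> :: ('m::finite, 'n::finite, 'k::comm_monoid_add) xy_series)"
  by (auto simp: fun_eq_iff low_part_def high_part_def)

lemma val_gt_of_high_part: "high_part \<omega> \<eta> C \<phi> b a \<noteq> 0 \<Longrightarrow> ereal C < val \<omega> \<eta> b a"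
  by (auto simp: high_part_def split: if_splits)

lemma finite_supp_low_part:
  assumes li: "rat_lin_indep \<omega>" and eta: "\<forall>i. \<eta> i \<noteq> -\<infinity>" and \<phi>: "spoly \<omega> \<phi>"
  shows "finite (supp (low_part \<omega> \<eta> C \<phi>))"
proof (rule finite_subset)
  let ?B = "{\<beta>. \<phi> \<beta> \<noteq> (\<lambda>_. 0)}"
  let ?A = "\<lambda>\<beta>. {\<alpha>. \<phi> \<beta> \<alpha> \<noteq> 0 \<and> wdot \<omega> \<alpha> \<le> C - real_of_ereal (edot \<eta> \<beta>)}"
  show "supp (low_part \<omega> \<eta> C \<phi>) \<subseteq> Sigma ?B ?A"
  proof
    fix x assume "x \<in> supp (low_part \<omega> \<eta> C \<phi>)"
    then obtain \<beta> \<alpha> where x: "x = (\<beta>, \<alpha>)" "\<phi> \<beta> \<alpha> \<noteq> 0" "val \<omega> \<eta> \<beta> \<alpha> \<le> ereal C"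
      by (auto simp: supp_def low_part_def split: if_splits)
    obtain r where r: "edot \<eta> \<beta> = ereal r"
      using x(3) edot_neq_MInfty[OF eta, of \<beta>] unfolding val_def by (cases "edot \<eta> \<beta>") auto
    then show "x \<in> Sigma ?B ?A" using x unfolding val_def by auto
  qed
  show "finite (Sigma ?B ?A)"
    using \<phi> puiseux_slab_finite[OF li] unfolding spoly_def by (intro finite_SigmaI) auto
qed

subsection \<open>Residue classes of exponents\<close>

definition frac_part :: "('n \<Rightarrow> rat) \<Rightarrow> 'n \<Rightarrow> rat" where
  "frac_part \<alpha> = (\<lambda>i. \<alpha> i - of_int \<lfloor>\<alpha> i\<rfloor>)"

text \<open>For a vector \<open>r\<close> of fractional parts, \<open>class_part r P\<close> is \<open>x\<^sup>-\<^sup>r\<close> times the sum of the terms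
  of \<open>P\<close> whose \<open>x\<close>-exponent lies in \<open>r + \<int>\<^sup>N\<close>.\<close>
definition class_part :: "('n \<Rightarrow> rat) \<Rightarrow> ('m, 'n, 'k::zero) xy_series \<Rightarrow> ('m, 'n, 'k) xy_series" where
  "class_part r P = (\<lambda>\<beta> \<alpha>. if frac_part (\<alpha> + r) = r then P \<beta> (\<alpha> + r) else 0)"

lemma frac_part_diff_Ints:
  assumes "\<forall>i. a i \<in> \<int>"
  shows "frac_part (x - a) = frac_part x"
proof -
  have "(x - a) i - of_int \<lfloor>(x - a) i\<rfloor> = x i - of_int \<lfloor>x i\<rfloor>" for i
  proof -
    obtain z where z: "a i = of_int z" using assms by (auto elim!: Ints_cases)
    have "\<lfloor>x i - of_int z\<rfloor> = \<lfloor>x i\<rfloor> - z" by (rule floor_diff_of_int)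
    then show ?thesis using z by simp
  qed
  then show ?thesis unfolding frac_part_def by auto
qed

lemma Ints_of_frac_part_add_eq: "frac_part (\<alpha> + r) = r \<Longrightarrow> \<alpha> i \<in> \<int>"
proof -
  assume "frac_part (\<alpha> + r) = r"
  then have "\<alpha> i + r i - of_int \<lfloor>\<alpha> i + r i\<rfloor> = r i" unfolding frac_part_def by (metis plus_fun_apply)
  then have "\<alpha> i = of_int \<lfloor>\<alpha> i + r i\<rfloor>" by simp
  then show ?thesis by (metis Ints_of_int)
qed

lemma class_part_frac_part: "class_part (frac_part \<alpha>) G \<beta> (\<alpha> - frac_part \<alpha>) = G \<beta> \<alpha>"
  by (simp add: class_part_def)

lemma class_part_other: "r \<noteq> frac_part \<alpha> \<Longrightarrow> class_part r G \<beta> (\<alpha> - r) = 0"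
  by (simp add: class_part_def)

lemma laurent_class_part:
  assumes "finite (supp P)"
  shows "laurent (class_part r P)"
proof -
  have "{(\<beta>, \<alpha>). class_part r P \<beta> \<alpha> \<noteq> 0} \<subseteq> (\<lambda>(b, a). (b, a - r)) ` supp P"
  proof
    fix x assume "x \<in> {(\<beta>, \<alpha>). class_part r P \<beta> \<alpha> \<noteq> 0}"
    then obtain \<beta> \<alpha> where x: "x = (\<beta>, \<alpha>)" "P \<beta> (\<alpha> + r) \<noteq> 0"
      by (auto simp: class_part_def split: if_splits)
    then show "x \<in> (\<lambda>(b, a). (b, a - r)) ` supp P"
      by (intro image_eqI[of _ _ "(\<beta>, \<alpha> + r)"]) (auto simp: supp_def)
  qed
  then have "finite {(\<beta>, \<alpha>). class_part r P \<beta> \<alpha> \<noteq> 0}"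
    using assms finite_subset by blast
  moreover have "\<forall>\<beta> \<alpha>. class_part r P \<beta> \<alpha> \<noteq> 0 \<longrightarrow> (\<forall>i. \<alpha> i \<in> \<int>)"
    using Ints_of_frac_part_add_eq by (auto simp: class_part_def split: if_splits)
  ultimately show ?thesis unfolding laurent_def by blast
qed

lemma pmult_class_part:
  fixes P f :: "('m, 'n, 'k::comm_ring_1) xy_series"
  assumes f: "laurent f"
  shows "pmult (class_part r P) f = class_part r (pmult P f)"
proof (intro ext)
  fix \<beta> \<alpha>
  have ff: "finite (supp f)" using f by (rule laurent_finite_supp)
  have "class_part r P (\<beta> - fst p) (\<alpha> - snd p) * f (fst p) (snd p) =
      (if frac_part (\<alpha> + r) = r then P (\<beta> - fst p) (\<alpha> + r - snd p) * f (fst p) (snd p) else 0)"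
    if "p \<in> supp f" for p
  proof -
    have "\<forall>i. snd p i \<in> \<int>" using that f unfolding laurent_def supp_def by auto
    then have "frac_part (\<alpha> - snd p + r) = frac_part (\<alpha> + r)"
      using frac_part_diff_Ints[of "snd p" "\<alpha> + r"] by (simp add: algebra_simps)
    then show ?thesis unfolding class_part_def by (simp add: algebra_simps)
  qed
  then show "pmult (class_part r P) f \<beta> \<alpha> = class_part r (pmult P f) \<beta> \<alpha>"
    unfolding pmult_eq_sum_supp[OF ff] class_part_def by (auto intro: sum.cong)
qed

lemma class_part_sum:
  "class_part r (\<Sum>i\<in>S. F i) = (\<Sum>i\<in>S. class_part r (F i :: ('m, 'n, 'k::comm_ring_1) xy_series))"
  by (intro ext) (simp add: class_part_def sum_fun_apply)

lemma ord_weta_class_part_ge: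
  assumes "\<And>b a. G b a \<noteq> 0 \<Longrightarrow> ereal m \<le> val \<omega> \<eta> b a"
  shows "ereal m \<le> ord_weta \<omega> \<eta> (class_part r G) + ereal (wdot \<omega> r)"
proof -
  have "ereal m - ereal (wdot \<omega> r) \<le> ord_weta \<omega> \<eta> (class_part r G)"
  proof (rule ord_weta_greatest)
    fix b a assume "class_part r G b a \<noteq> 0"
    then have "ereal m \<le> val \<omega> \<eta> b a + ereal (wdot \<omega> r)"
      using assms val_add_x by (metis class_part_def)
    then show "ereal m - ereal (wdot \<omega> r) \<le> val \<omega> \<eta> b a" by (cases "val \<omega> \<eta> b a") auto
  qed
  then show ?thesis by (cases "ord_weta \<omega> \<eta> (class_part r G)") auto
qed


subsection \<open>The inclusion of the initial ideal of the extension\<close>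

text \<open>\<open>G\<close> is obtained by truncating the coefficients \<open>\<phi>\<^sub>i\<close> of \<open>g = \<Sum> \<phi>\<^sub>i f\<^sub>i\<close> above a large value.\<close>
lemma ext_ideal_truncation:
  fixes \<omega> :: "'n::finite \<Rightarrow> real" and \<eta> :: "'m::finite \<Rightarrow> ereal"
    and I :: "('m, 'n, 'k::comm_ring_1) xy_series set"
  assumes li: "rat_lin_indep \<omega>" and eta: "\<forall>i. \<eta> i \<noteq> -\<infinity>" and I: "laurent_ideal I"
    and g: "g \<in> ext_ideal \<omega> I"
  obtains G where "finite (supp G)" "\<And>r. class_part r G \<in> I"
    "\<And>\<beta> \<alpha>. g \<beta> \<alpha> \<noteq> G \<beta> \<alpha> \<Longrightarrow> ereal m < val \<omega> \<eta> \<beta> \<alpha>"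
proof -
  obtain n :: nat and \<phi> f where g: "g = (\<Sum>i<n. pmult (\<phi> i) (f i))" "\<forall>i<n. spoly \<omega> (\<phi> i) \<and> f i \<in> I"
    using g unfolding ext_ideal_def by (rule gen_ideal_cases)
  have fl: "laurent (f i)" if "i < n" for i using g(2) that I unfolding laurent_ideal_def by blast
  then have ff: "finite (supp (f i))" if "i < n" for i using that laurent_finite_supp by blast
  have "finite (\<Union>i<n. supp (f i))" using ff by auto
  then obtain L where L: "\<forall>(b, a)\<in>(\<Union>i<n. supp (f i)). ereal L \<le> val \<omega> \<eta> b a"
    using val_bounded_below[OF _ eta] by blast
  define C where "C = m - L"
  define P where "P i = low_part \<omega> \<eta> C (\<phi> i)" for i
  define Q where "Q i = high_part \<omega> \<eta> C (\<phi> i)" for i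
  define G where "G = (\<Sum>i<n. pmult (P i) (f i))"
  have fP: "finite (supp (P i))" if "i < n" for i
    unfolding P_def using g(2) that by (intro finite_supp_low_part[OF li eta]) auto
  show thesis
  proof (rule that)
    show "finite (supp G)"
      unfolding G_def using fP ff by (intro finite_supp_sum) (auto intro: finite_supp_pmult)
    show "class_part r G \<in> I" for r
    proof -
      have "class_part r G = (\<Sum>i<n. pmult (class_part r (P i)) (f i))"
        unfolding G_def class_part_sum using fl by (intro sum.cong refl pmult_class_part[symmetric]) auto
      also have "\<dots> \<in> I"
      proof (rule laurent_ideal_sum[OF I])
        fix i assume "i \<in> {..<n}"
        then have "laurent (class_part r (P i))" "f i \<in> I" using fP g(2) laurent_class_part by auto
        then show "pmult (class_part r (P i)) (f i) \<in> I" using I unfolding laurent_ideal_def by blast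
      qed
      finally show ?thesis .
    qed
    show "ereal m < val \<omega> \<eta> \<beta> \<alpha>" if "g \<beta> \<alpha> \<noteq> G \<beta> \<alpha>" for \<beta> \<alpha>
    proof -
      have "pmult (\<phi> i) (f i) = pmult (P i) (f i) + pmult (Q i) (f i)" if "i < n" for i
        using pmult_add_left[OF ff[OF that], of "P i" "Q i"]
        by (simp only: P_def Q_def low_part_add_high_part)
      then have "g = G + (\<Sum>i<n. pmult (Q i) (f i))"
        unfolding g(1) G_def by (simp add: sum.distrib)
      then have "(\<Sum>i<n. pmult (Q i) (f i) \<beta> \<alpha>) \<noteq> 0"
        using that by (simp add: sum_fun_apply)
      then obtain i where i: "i \<in> {..<n}" "pmult (Q i) (f i) \<beta> \<alpha> \<noteq> 0"
        by (rule sum.not_neutral_contains_not_neutral)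
      have "i < n" using i(1) by simp
      have "ereal (C + L) < val \<omega> \<eta> \<beta> \<alpha>"
      proof (rule val_gt_of_pmult_nonzero[OF eta ff[OF \<open>i < n\<close>] _ _ i(2)])
        show "ereal C < val \<omega> \<eta> b a" if "Q i b a \<noteq> 0" for b a
          using that unfolding Q_def by (rule val_gt_of_high_part)
        show "ereal L \<le> val \<omega> \<eta> b a" if "f i b a \<noteq> 0" for b a
          using that i(1) L unfolding supp_def by blast
      qed
      then show ?thesis by (simp add: C_def)
    qed
  qed
qed

text \<open>Terms of different residue classes cannot cancel, so the initial form splits along the classes.\<close>
lemma in_weta_eq_sum_class_parts:
  fixes g G :: "('m::finite, 'n::finite, 'k::comm_ring_1) xy_series"
  assumes G: "finite (supp G)" and m: "ord_weta \<omega> \<eta> g = ereal m"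
    and close: "\<And>\<beta> \<alpha>. g \<beta> \<alpha> \<noteq> G \<beta> \<alpha> \<Longrightarrow> ereal m < val \<omega> \<eta> \<beta> \<alpha>"
  shows "in_weta \<omega> \<eta> g = (\<Sum>r\<in>frac_part ` snd ` supp G.
      if ord_weta \<omega> \<eta> (class_part r G) + ereal (wdot \<omega> r) = ereal m
      then shift 0 r (in_weta \<omega> \<eta> (class_part r G)) else 0)"
proof (intro ext)
  fix \<beta> \<alpha>
  let ?R = "frac_part ` snd ` supp G"
  let ?F = "\<lambda>r. class_part r G"
  let ?cond = "\<lambda>r. ord_weta \<omega> \<eta> (?F r) + ereal (wdot \<omega> r) = ereal m"
  let ?init = "if G \<beta> \<alpha> \<noteq> 0 \<and> val \<omega> \<eta> \<beta> \<alpha> = ereal m then G \<beta> \<alpha> else 0"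
  define r0 where "r0 = frac_part \<alpha>"
  have G_ge: "ereal m \<le> val \<omega> \<eta> b a" if "G b a \<noteq> 0" for b a
    using that close[of b a] ord_weta_le_val[of g b a \<omega> \<eta>] m by (cases "g b a = G b a") auto
  have val_r0: "val \<omega> \<eta> \<beta> \<alpha> = val \<omega> \<eta> \<beta> (\<alpha> - r0) + ereal (wdot \<omega> r0)"
    using val_add_x[of \<omega> \<eta> \<beta> "\<alpha> - r0" r0] by simp
  have F_r0: "?F r0 \<beta> (\<alpha> - r0) = G \<beta> \<alpha>" unfolding r0_def by (rule class_part_frac_part)
  have lhs: "in_weta \<omega> \<eta> g \<beta> \<alpha> = ?init"
    using in_weta_eq[OF m, of \<beta> \<alpha>] close[of \<beta> \<alpha>] by (cases "g \<beta> \<alpha> = G \<beta> \<alpha>") auto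
  have init_cond: "r0 \<in> ?R \<and> ?cond r0" if "G \<beta> \<alpha> \<noteq> 0" "val \<omega> \<eta> \<beta> \<alpha> = ereal m"
  proof
    show "r0 \<in> ?R" using that(1) unfolding r0_def supp_def by force
    have "ord_weta \<omega> \<eta> (?F r0) \<le> val \<omega> \<eta> \<beta> (\<alpha> - r0)"
      using that(1) F_r0 by (intro ord_weta_le_val) simp
    then have "ord_weta \<omega> \<eta> (?F r0) + ereal (wdot \<omega> r0) \<le> ereal m"
      using val_r0 that(2) by (metis add_right_mono)
    then show "?cond r0" using ord_weta_class_part_ge[OF G_ge] by (rule antisym)
  qed
  have cond_init: "in_weta \<omega> \<eta> (?F r0) \<beta> (\<alpha> - r0) = ?init" if "?cond r0"
  proof -
    have "ord_weta \<omega> \<eta> (?F r0) = ereal (m - wdot \<omega> r0)" using that by (simp add: ereal_add_real_eq_iff)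
    moreover have "val \<omega> \<eta> \<beta> (\<alpha> - r0) = ereal (m - wdot \<omega> r0) \<longleftrightarrow> val \<omega> \<eta> \<beta> \<alpha> = ereal m"
      unfolding val_r0 by (simp add: ereal_add_real_eq_iff)
    ultimately show ?thesis using F_r0 by (simp add: in_weta_eq)
  qed
  have other: "in_weta \<omega> \<eta> (?F r) \<beta> (\<alpha> - r) = 0" if "r \<noteq> r0" for r
    using class_part_other[of r \<alpha> G \<beta>] that unfolding r0_def by (simp add: in_weta_def)
  have "(\<Sum>r\<in>?R. if ?cond r then shift 0 r (in_weta \<omega> \<eta> (?F r)) else 0) \<beta> \<alpha>
      = (\<Sum>r\<in>?R. if ?cond r then in_weta \<omega> \<eta> (?F r) \<beta> (\<alpha> - r) else 0)"
    unfolding sum_fun_apply by (intro sum.cong refl) (simp add: shift_def)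
  also have "\<dots> = (\<Sum>r\<in>?R. if r = r0 then (if ?cond r then in_weta \<omega> \<eta> (?F r) \<beta> (\<alpha> - r) else 0) else 0)"
    using other by (intro sum.cong refl) auto
  also have "\<dots> = (if r0 \<in> ?R \<and> ?cond r0 then in_weta \<omega> \<eta> (?F r0) \<beta> (\<alpha> - r0) else 0)"
    using G by (simp add: sum.delta)
  also have "\<dots> = in_weta \<omega> \<eta> g \<beta> \<alpha>"
    using lhs init_cond cond_init by auto
  finally show "in_weta \<omega> \<eta> g \<beta> \<alpha>
      = (\<Sum>r\<in>?R. if ?cond r then shift 0 r (in_weta \<omega> \<eta> (?F r)) else 0) \<beta> \<alpha>" by simp
qed

lemma pmult_in_eta_mem_ext_In_weta:
  fixes \<omega> :: "'n::finite \<Rightarrow> real" and \<eta> :: "'m::finite \<Rightarrow> ereal"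
    and I :: "('m, 'n, 'k::comm_ring_1) xy_series set"
  assumes li: "rat_lin_indep \<omega>" and eta: "\<forall>i. \<eta> i \<noteq> -\<infinity>" and I: "laurent_ideal I"
    and g: "g \<in> ext_ideal \<omega> I" and fin: "ord_eta \<omega> \<eta> g < \<infinity>" and \<psi>: "spoly \<omega> \<psi>"
  shows "pmult \<psi> (in_eta \<omega> \<eta> g) \<in> ext_ideal \<omega> (In_weta \<omega> \<eta> I)"
proof -
  have in_eta: "in_eta \<omega> \<eta> g = in_weta \<omega> \<eta> g" by (rule in_eta_eq_in_weta[OF eta fin])
  have ord: "ord_eta \<omega> \<eta> g = ord_weta \<omega> \<eta> g" by (rule ord_eta_eq_ord_weta[OF eta])
  show ?thesis
  proof (cases "ord_weta \<omega> \<eta> g")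
    case MInf
    then have "in_eta \<omega> \<eta> g = 0"
      unfolding in_eta using val_neq_MInfty[OF eta] by (auto simp: in_weta_def val_def fun_eq_iff)
    then show ?thesis unfolding ext_ideal_def by (simp only: pmult_zero_right gen_ideal_zero)
  next
    case PInf
    then show ?thesis using fin ord by simp
  next
    case (real m)
    obtain G where G: "finite (supp G)" "\<And>r. class_part r G \<in> I"
        and close: "\<And>\<beta> \<alpha>. g \<beta> \<alpha> \<noteq> G \<beta> \<alpha> \<Longrightarrow> ereal m < val \<omega> \<eta> \<beta> \<alpha>"
      using ext_ideal_truncation[OF li eta I g] by blast
    let ?R = "frac_part ` snd ` supp G"
    let ?h = "\<lambda>r. in_weta \<omega> \<eta> (class_part r G)"
    let ?cond = "\<lambda>r. ord_weta \<omega> \<eta> (class_part r G) + ereal (wdot \<omega> r) = ereal m"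
    have h_fin: "finite (supp (?h r))" for r
      by (intro finite_supp_in_weta laurent_finite_supp laurent_class_part G(1))
    have h_mem: "?h r \<in> In_weta \<omega> \<eta> I" for r
      unfolding In_weta_def using G(2) h_fin by (intro gen_ideal_generator laurent_monomial_one) auto
    have "in_eta \<omega> \<eta> g = (\<Sum>r\<in>?R. if ?cond r then shift 0 r (?h r) else 0)"
      unfolding in_eta by (rule in_weta_eq_sum_class_parts[OF G(1) real close])
    then have "pmult \<psi> (in_eta \<omega> \<eta> g) = pmult \<psi> (\<Sum>r\<in>?R. if ?cond r then shift 0 r (?h r) else 0)"
      by (simp only:)
    also have "\<dots> = (\<Sum>r\<in>?R. pmult \<psi> (if ?cond r then shift 0 r (?h r) else 0))"
      using G(1) h_fin by (intro pmult_sum_right) (auto intro: finite_supp_shift)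
    also have "\<dots> \<in> ext_ideal \<omega> (In_weta \<omega> \<eta> I)"
      unfolding ext_ideal_def
    proof (rule gen_ideal_sum)
      fix r
      have "pmult \<psi> (shift 0 r (?h r)) = pmult (shift 0 r \<psi>) (?h r)"
        by (simp only: pmult_shift_right[OF h_fin] pmult_shift_left[OF h_fin])
      moreover have "pmult (shift 0 r \<psi>) (?h r) \<in> gen_ideal (spoly \<omega>) (In_weta \<omega> \<eta> I)"
        by (intro gen_ideal_pmult spoly_shift \<psi> h_mem)
      ultimately show "pmult \<psi> (if ?cond r then shift 0 r (?h r) else 0) \<in> gen_ideal (spoly \<omega>) (In_weta \<omega> \<eta> I)"
        by (simp add: pmult_zero_right gen_ideal_zero)
    qed
    finally show ?thesis .
  qed
qed

lemma In_eta_ext_subset_ext_In_weta: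
  fixes \<omega> :: "'n::finite \<Rightarrow> real" and \<eta> :: "'m::finite \<Rightarrow> ereal"
    and I :: "('m, 'n, 'k::comm_ring_1) xy_series set"
  assumes li: "rat_lin_indep \<omega>" and eta: "\<forall>i. \<eta> i \<noteq> -\<infinity>" and I: "laurent_ideal I"
  shows "In_eta \<omega> \<eta> (ext_ideal \<omega> I) \<subseteq> ext_ideal \<omega> (In_weta \<omega> \<eta> I)"
proof
  fix x assume "x \<in> In_eta \<omega> \<eta> (ext_ideal \<omega> I)"
  then obtain n :: nat and \<psi> s where x: "x = (\<Sum>i<n. pmult (\<psi> i) (s i))"
      "\<forall>i<n. spoly \<omega> (\<psi> i) \<and> s i \<in> {in_eta \<omega> \<eta> g | g. g \<in> ext_ideal \<omega> I \<and> ord_eta \<omega> \<eta> g < \<infinity>}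
        \<union> {yvar i | i. \<eta> i = \<infinity>}"
    unfolding In_eta_def by (rule gen_ideal_cases)
  have "pmult (\<psi> i) (s i) \<in> ext_ideal \<omega> (In_weta \<omega> \<eta> I)" if "i < n" for i
  proof -
    have \<psi>: "spoly \<omega> (\<psi> i)" using x(2) that by blast
    from x(2) that consider g where "g \<in> ext_ideal \<omega> I" "ord_eta \<omega> \<eta> g < \<infinity>" "s i = in_eta \<omega> \<eta> g"
      | j where "\<eta> j = \<infinity>" "s i = yvar j"
      by blast
    then show ?thesis
    proof cases
      case 1
      then show ?thesis using pmult_in_eta_mem_ext_In_weta[OF li eta I 1(1,2) \<psi>] by simp
    next
      case 2
      have "s i \<in> In_weta \<omega> \<eta> I"
        unfolding In_weta_def using 2 by (intro gen_ideal_generator laurent_monomial_one) (auto simp: finite_supp_yvar)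
      then show ?thesis unfolding ext_ideal_def by (rule gen_ideal_pmult[of "spoly \<omega>", OF \<psi>])
    qed
  qed
  then show "x \<in> ext_ideal \<omega> (In_weta \<omega> \<eta> I)" unfolding x(1) by (intro gen_ideal_sum[where C="spoly \<omega>", folded ext_ideal_def]) simp
qed

theorem proposition9p1:
  fixes \<omega> :: "'n::finite \<Rightarrow> real"
    and \<eta> :: "'m::finite \<Rightarrow> ereal"
    and I :: "(('m \<Rightarrow> nat) \<Rightarrow> ('n \<Rightarrow> rat) \<Rightarrow> 'k::field_char_0) set"
  assumes "alg_closed_field TYPE('k)"
    and "rat_lin_indep \<omega>"
    and "\<forall>i. \<eta> i \<noteq> -\<infinity>"
    and "laurent_ideal I"
  shows "ext_ideal \<omega> (In_weta \<omega> \<eta> I) = In_eta \<omega> \<eta> (ext_ideal \<omega> I)"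
  using ext_In_weta_subset_In_eta_ext[OF assms(3,4)] In_eta_ext_subset_ext_In_weta[OF assms(2,3,4)]
  by (rule antisym)

end
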